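(* Let $G$ be a finite group acting freely on $X$ and $n\ge 2$. Then \[\mathsf{TC}^G_{\mathsf{effv},n}(X)\le \mathsf{TC}^G_{\mathsf{effl},n}(X)\le \mathsf{TC}_n(X/G)\le \mathsf{TC}^G_{\mathsf{orb},n}(X).\]
   Context: All spaces are Hausdorff, path-connected and locally path-connected; $G$ acts on the right, $\pi:X\to X/G$ is the quotient map. Sectional category $\mathrm{secat}(p)$ is non-reduced: the least number of open sets covering the base, each admitting a continuous section of $p$. $PX$ is the path space. $M_n(X)$ is the space of multipaths: $n$-tuples $(\alpha_1,\ldots,\alpha_n)\in(PX)^n$ with $\alpha_1(0)=\cdots=\alpha_n(0)$, and $e_n:M_n(X)\to X^n$ evaluates at $1$; $\mathsf{TC}_n(X)=\mathrm{secat}(e_n)$. $M^G_n(X)$ is the subspace of $PX\times G\times\cdots\times G\times PX$ ($n$ path factors, $n-1$ group factors) of tuples $(\alpha_1,g_1,\ldots,g_{n-1},\alpha_n)$ with $\alpha_i(0)g_i=\alpha_{i+1}(0)$; $\epsilon_n:M^G_n(X)\to X^n$ evaluates the paths at $1$; $\mathsf{TC}^G_{\mathsf{effv},n}(X)=\mathrm{secat}(\epsilon_n)$. $\mathsf{TC}^G_{\mathsf{effl},n}(X)=\mathrm{secat}(\varepsilon_n)$ where $\varepsilon_n=(1\times\pi^{n-1})\circ e_n:M_n(X)\to X\times(X/G)^{n-1}$. $\mathsf{TC}^G_{\mathsf{orb},n}(X)=\mathrm{secat}(\pi^n\circ e_n: M_n(X)\to (X/G)^n)$. *)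

theory Defs
  imports "HOL-Analysis.Analysis" "HOL-Library.Extended_Nat" "HOL-Algebra.Group"
begin

section \<open>Sectional category (non-reduced)\<close>

definition secat :: "'e topology \<Rightarrow> 'b topology \<Rightarrow> ('e \<Rightarrow> 'b) \<Rightarrow> enat" where
  "secat E B p = Inf {enat k | k. \<exists>U :: nat \<Rightarrow> 'b set.
      topspace B \<subseteq> (\<Union>i<k. U i) \<and>
      (\<forall>i<k. openin B (U i) \<and>
         (\<exists>s. continuous_map (subtopology B (U i)) E s \<and> (\<forall>b\<in>U i. p (s b) = b)))}"

definition paths :: "'a topology \<Rightarrow> (real \<Rightarrow> 'a) set" where
  "paths X = {f. pathin X f \<and> f \<in> extensional {0..1}}"

definition path_space :: "'a topology \<Rightarrow> (real \<Rightarrow> 'a) topology" where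
  "path_space X = topology_generated_by
     {{f \<in> paths X. f ` K \<subseteq> V} | K V. compact K \<and> K \<subseteq> {0..1} \<and> openin X V}"

definition power_top :: "'a topology \<Rightarrow> nat \<Rightarrow> (nat \<Rightarrow> 'a) topology" where
  "power_top X n = product_topology (\<lambda>i. X) {..<n}"

definition multipath_space :: "'a topology \<Rightarrow> nat \<Rightarrow> (nat \<Rightarrow> real \<Rightarrow> 'a) topology" where
  "multipath_space X n = subtopology (power_top (path_space X) n)
     {\<alpha> \<in> topspace (power_top (path_space X) n). \<forall>i<n. \<forall>j<n. \<alpha> i 0 = \<alpha> j 0}"

definition eval_end :: "nat \<Rightarrow> (nat \<Rightarrow> real \<Rightarrow> 'a) \<Rightarrow> (nat \<Rightarrow> 'a)" where
  "eval_end n \<alpha> = (\<lambda>i\<in>{..<n}. \<alpha> i 1)"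

definition TC :: "nat \<Rightarrow> 'a topology \<Rightarrow> enat" where
  "TC n X = secat (multipath_space X n) (power_top X n) (eval_end n)"

definition right_action :: "('g, 'm) monoid_scheme \<Rightarrow> 'a topology \<Rightarrow> ('a \<Rightarrow> 'g \<Rightarrow> 'a) \<Rightarrow> bool" where
  "right_action G X act \<longleftrightarrow> group G \<and>
     (\<forall>g\<in>carrier G. continuous_map X X (\<lambda>x. act x g)) \<and>
     (\<forall>x\<in>topspace X. act x \<one>\<^bsub>G\<^esub> = x) \<and>
     (\<forall>x\<in>topspace X. \<forall>g\<in>carrier G. \<forall>h\<in>carrier G. act (act x g) h = act x (g \<otimes>\<^bsub>G\<^esub> h))"

definition free_action :: "('g, 'm) monoid_scheme \<Rightarrow> 'a topology \<Rightarrow> ('a \<Rightarrow> 'g \<Rightarrow> 'a) \<Rightarrow> bool" where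
  "free_action G X act \<longleftrightarrow> right_action G X act \<and>
     (\<forall>x\<in>topspace X. \<forall>g\<in>carrier G. act x g = x \<longrightarrow> g = \<one>\<^bsub>G\<^esub>)"

definition orbit_map :: "('g, 'm) monoid_scheme \<Rightarrow> ('a \<Rightarrow> 'g \<Rightarrow> 'a) \<Rightarrow> 'a \<Rightarrow> 'a set" where
  "orbit_map G act x = (\<lambda>g. act x g) ` carrier G"

definition quotient_top :: "'a topology \<Rightarrow> ('a \<Rightarrow> 'b) \<Rightarrow> 'b topology" where
  "quotient_top X q = topology (\<lambda>U. U \<subseteq> q ` topspace X \<and> openin X {x \<in> topspace X. q x \<in> U})"

lemma istopology_quotient_top:
  "istopology (\<lambda>U. U \<subseteq> q ` topspace X \<and> openin X {x \<in> topspace X. q x \<in> U})"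
proof -
  have "{x \<in> topspace X. q x \<in> S \<inter> T} = {x \<in> topspace X. q x \<in> S} \<inter> {x \<in> topspace X. q x \<in> T}" for S T
    by auto
  moreover have "{x \<in> topspace X. q x \<in> \<Union>K} = (\<Union>U\<in>K. {x \<in> topspace X. q x \<in> U})" for K
    by auto
  ultimately show ?thesis
    unfolding istopology_def by (auto intro!: openin_Union)
qed

definition orbit_space :: "'a topology \<Rightarrow> ('g, 'm) monoid_scheme \<Rightarrow> ('a \<Rightarrow> 'g \<Rightarrow> 'a) \<Rightarrow> 'a set topology" where
  "orbit_space X G act = quotient_top X (orbit_map G act)"

text \<open>The factors are grouped as
  (paths, group elements), which is homeomorphic to the interleaved product.\<close>
definition multipath_G_space :: "'a topology \<Rightarrow> ('g, 'm) monoid_scheme \<Rightarrow> ('a \<Rightarrow> 'g \<Rightarrow> 'a) \<Rightarrow> nat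
    \<Rightarrow> ((nat \<Rightarrow> real \<Rightarrow> 'a) \<times> (nat \<Rightarrow> 'g)) topology" where
  "multipath_G_space X G act n =
     (let T = prod_topology (power_top (path_space X) n) (power_top (discrete_topology (carrier G)) (n - 1))
      in subtopology T {(\<alpha>, g) \<in> topspace T. \<forall>i < n - 1. act (\<alpha> i 0) (g i) = \<alpha> (Suc i) 0})"

definition TC_effv :: "nat \<Rightarrow> 'a topology \<Rightarrow> ('g, 'm) monoid_scheme \<Rightarrow> ('a \<Rightarrow> 'g \<Rightarrow> 'a) \<Rightarrow> enat" where
  "TC_effv n X G act = secat (multipath_G_space X G act n) (power_top X n) (\<lambda>(\<alpha>, g). eval_end n \<alpha>)"

definition TC_effl :: "nat \<Rightarrow> 'a topology \<Rightarrow> ('g, 'm) monoid_scheme \<Rightarrow> ('a \<Rightarrow> 'g \<Rightarrow> 'a) \<Rightarrow> enat" where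
  "TC_effl n X G act = secat (multipath_space X n)
      (prod_topology X (power_top (orbit_space X G act) (n - 1)))
      (\<lambda>\<alpha>. (\<alpha> 0 1, \<lambda>i\<in>{..<n - 1}. orbit_map G act (\<alpha> (Suc i) 1)))"

definition TC_orb :: "nat \<Rightarrow> 'a topology \<Rightarrow> ('g, 'm) monoid_scheme \<Rightarrow> ('a \<Rightarrow> 'g \<Rightarrow> 'a) \<Rightarrow> enat" where
  "TC_orb n X G act = secat (multipath_space X n) (power_top (orbit_space X G act) n)
      (\<lambda>\<alpha>. \<lambda>i\<in>{..<n}. orbit_map G act (\<alpha> i 1))"

end

theory Submission
  imports Defs
begin

text \<open>A finite group acting freely on a Hausdorff space X makes the orbit map X \<rightarrow> X/G a
  covering map: every point has an open neighbourhood on which the orbit map is injective.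
  Hence paths in X/G lift uniquely from any point over their start, and the lift depends
  continuously, in the compact-open topology, on the path and the starting point.
  Each of the three inequalities compares the sectional categories of two maps whose bases
  are related by a continuous map f, so it suffices to turn every local section of the one
  into a local section of the other over the preimage under f.
  A multipath in X whose end points lie in the orbits of given points of X is translated
  path by path, by locally constant group elements, into an element of M^G_n(X) ending at
  those points; a multipath in X/G together with a point of X over its first end point is
  lifted by lifting the first path backwards from that point and the others from the start
  point so obtained; and a multipath in X projects to one in X/G.\<close>

section \<open>Path spaces\<close>

lemma topspace_path_space [simp]: "topspace (path_space X) = paths X"
proof -
  have "paths X \<in> {{f \<in> paths X. f ` K \<subseteq> V} | K V. compact K \<and> K \<subseteq> {0..1} \<and> openin X V}"
    by (rule CollectI, rule exI[of _ "{}"], rule exI[of _ "topspace X"]) auto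
  then show ?thesis unfolding path_space_def by auto
qed

lemma openin_path_space_subbasis:
  assumes "compact K" "K \<subseteq> {0..1}" "openin X V"
  shows "openin (path_space X) {f \<in> paths X. f ` K \<subseteq> V}"
  unfolding path_space_def by (rule topology_generated_by_Basis) (use assms in blast)

lemma paths_in_topspace: "f \<in> paths X \<Longrightarrow> t \<in> {0..1} \<Longrightarrow> f t \<in> topspace X"
  unfolding paths_def pathin_def by (auto simp: continuous_map_def Pi_iff)

lemma continuous_map_path_spaceI:
  assumes "\<And>t. t \<in> topspace T \<Longrightarrow> F t \<in> paths X"
    and "\<And>K V. compact K \<Longrightarrow> K \<subseteq> {0..1} \<Longrightarrow> openin X V \<Longrightarrow>
           openin T {t \<in> topspace T. F t ` K \<subseteq> V}"
  shows "continuous_map T (path_space X) F"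
  unfolding path_space_def
proof (rule continuous_on_generated_topo)
  fix U assume "U \<in> {{f \<in> paths X. f ` K \<subseteq> V} | K V. compact K \<and> K \<subseteq> {0..1} \<and> openin X V}"
  then obtain K V where KV: "compact K" "K \<subseteq> {0..1}" "openin X V"
    and U: "U = {f \<in> paths X. f ` K \<subseteq> V}"
    by blast
  have "F -` U \<inter> topspace T = {t \<in> topspace T. F t ` K \<subseteq> V}"
    using assms(1) U by auto
  then show "openin T (F -` U \<inter> topspace T)" using assms(2)[OF KV] by simp
next
  show "F ` topspace T \<subseteq> \<Union> {{f \<in> paths X. f ` K \<subseteq> V} | K V. compact K \<and> K \<subseteq> {0..1} \<and> openin X V}"
    using topspace_path_space[of X] assms(1) unfolding path_space_def by auto
qed

lemma continuous_map_path_space_paths: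
  "continuous_map T (path_space X) F \<Longrightarrow> t \<in> topspace T \<Longrightarrow> F t \<in> paths X"
  using continuous_map_image_subset_topspace by fastforce

lemma openin_path_space_preimage:
  assumes F: "continuous_map T (path_space X) F" and "compact K" "K \<subseteq> {0..1}" "openin X V"
  shows "openin T {t \<in> topspace T. F t ` K \<subseteq> V}"
proof -
  have "openin T {t \<in> topspace T. F t \<in> {f \<in> paths X. f ` K \<subseteq> V}}"
    using openin_continuous_map_preimage[OF F openin_path_space_subbasis] assms(2-4) by blast
  moreover have "{t \<in> topspace T. F t \<in> {f \<in> paths X. f ` K \<subseteq> V}} = {t \<in> topspace T. F t ` K \<subseteq> V}"
    using continuous_map_path_space_paths[OF F] by auto
  ultimately show ?thesis by simp
qed

lemma continuous_map_path_eval: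
  assumes "s \<in> {0..1}"
  shows "continuous_map (path_space X) X (\<lambda>f. f s)"
  unfolding continuous_map_def
proof safe
  fix f assume "f \<in> topspace (path_space X)"
  then show "f s \<in> topspace X" using paths_in_topspace assms by simp
next
  fix U assume "openin X U"
  then have "openin (path_space X) {f \<in> paths X. f ` {s} \<subseteq> U}"
    by (intro openin_path_space_subbasis) (use assms in auto)
  then show "openin (path_space X) {f \<in> topspace (path_space X). f s \<in> U}" by simp
qed

definition path_map :: "('a \<Rightarrow> 'b) \<Rightarrow> (real \<Rightarrow> 'a) \<Rightarrow> real \<Rightarrow> 'b" where
  "path_map h f = (\<lambda>t\<in>{0..1}. h (f t))"

lemma path_map_paths:
  assumes "continuous_map X Y h" "f \<in> paths X"
  shows "path_map h f \<in> paths Y"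
proof -
  have "pathin Y (h \<circ> f)" using assms unfolding paths_def pathin_def
    by (auto intro: continuous_map_compose)
  then have "pathin Y (path_map h f)" unfolding pathin_def path_map_def
    by (rule continuous_map_eq) auto
  then show ?thesis unfolding paths_def path_map_def by auto
qed

lemma continuous_map_path_map:
  assumes h: "continuous_map X Y h"
  shows "continuous_map (path_space X) (path_space Y) (path_map h)"
proof (rule continuous_map_path_spaceI)
  fix K :: "real set" and V assume KV: "compact K" "K \<subseteq> {0..1}" "openin Y V"
  have "openin (path_space X) {f \<in> paths X. f ` K \<subseteq> {x \<in> topspace X. h x \<in> V}}"
    using openin_path_space_subbasis[OF KV(1,2) openin_continuous_map_preimage[OF h KV(3)]] .
  moreover have "{f \<in> paths X. f ` K \<subseteq> {x \<in> topspace X. h x \<in> V}} =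
      {f \<in> topspace (path_space X). path_map h f ` K \<subseteq> V}"
    using KV(2) paths_in_topspace[of _ X] by (auto simp: path_map_def subset_iff)
  ultimately show "openin (path_space X) {f \<in> topspace (path_space X). path_map h f ` K \<subseteq> V}"
    by simp
qed (use path_map_paths[OF h] in simp)

definition path_reverse :: "(real \<Rightarrow> 'a) \<Rightarrow> real \<Rightarrow> 'a" where
  "path_reverse f = (\<lambda>t\<in>{0..1}. f (1 - t))"

lemma path_reverse_paths:
  assumes "f \<in> paths X" shows "path_reverse f \<in> paths X"
proof -
  have "continuous_map (top_of_set {0..1}) (top_of_set {0..1}) (\<lambda>t::real. 1 - t)"
    by (auto simp: continuous_map_in_subtopology intro!: continuous_intros)
  moreover have "continuous_map (top_of_set {0..1}) X f"
    using assms unfolding paths_def pathin_def by simp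
  ultimately have "pathin X (f \<circ> (\<lambda>t. 1 - t))"
    unfolding pathin_def by (rule continuous_map_compose)
  then have "pathin X (path_reverse f)" unfolding pathin_def path_reverse_def
    by (rule continuous_map_eq) auto
  then show ?thesis unfolding paths_def path_reverse_def by auto
qed

lemma continuous_map_path_reverse: "continuous_map (path_space X) (path_space X) path_reverse"
proof (rule continuous_map_path_spaceI)
  fix K :: "real set" and V assume KV: "compact K" "K \<subseteq> {0..1}" "openin X V"
  have "compact ((\<lambda>t::real. 1 - t) ` K)"
    by (rule compact_continuous_image[OF _ KV(1)]) (intro continuous_intros)
  then have "openin (path_space X) {f \<in> paths X. f ` ((\<lambda>t. 1 - t) ` K) \<subseteq> V}"
    by (rule openin_path_space_subbasis[OF _ _ KV(3)]) (use KV(2) in auto)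
  moreover have "{f \<in> paths X. f ` ((\<lambda>t. 1 - t) ` K) \<subseteq> V} =
      {f \<in> topspace (path_space X). path_reverse f ` K \<subseteq> V}"
    using KV(2) by (auto simp: path_reverse_def subset_iff)
  ultimately show "openin (path_space X) {f \<in> topspace (path_space X). path_reverse f ` K \<subseteq> V}"
    by simp
qed (use path_reverse_paths in simp)

lemma secat_le_pullback:
  assumes f: "continuous_map B' B f"
    and sections: "\<And>U s. openin B U \<Longrightarrow> continuous_map (subtopology B U) E s \<Longrightarrow>
       \<forall>b\<in>U. p (s b) = b \<Longrightarrow>
       \<exists>s'. continuous_map (subtopology B' {b \<in> topspace B'. f b \<in> U}) E' s' \<and>
            (\<forall>b\<in>{b \<in> topspace B'. f b \<in> U}. p' (s' b) = b)"
  shows "secat E' B' p' \<le> secat E B p"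
  unfolding secat_def
proof (rule Inf_superset_mono, rule subsetI)
  fix x assume "x \<in> {enat k | k. \<exists>U :: nat \<Rightarrow> _ set.
      topspace B \<subseteq> (\<Union>i<k. U i) \<and>
      (\<forall>i<k. openin B (U i) \<and> (\<exists>s. continuous_map (subtopology B (U i)) E s \<and> (\<forall>b\<in>U i. p (s b) = b)))}"
  then obtain k U where x: "x = enat k" and cover: "topspace B \<subseteq> (\<Union>i<k. U i)"
    and U: "\<And>i. i < k \<Longrightarrow> openin B (U i) \<and>
              (\<exists>s. continuous_map (subtopology B (U i)) E s \<and> (\<forall>b\<in>U i. p (s b) = b))"
    by blast
  define U' where "U' i = {b \<in> topspace B'. f b \<in> U i}" for i
  have "topspace B' \<subseteq> (\<Union>i<k. U' i)"
    using cover continuous_map_image_subset_topspace[OF f] unfolding U'_def by blast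
  moreover have "openin B' (U' i) \<and>
      (\<exists>s. continuous_map (subtopology B' (U' i)) E' s \<and> (\<forall>b\<in>U' i. p' (s b) = b))" if "i < k" for i
    using U[OF that] sections openin_continuous_map_preimage[OF f] unfolding U'_def by blast
  ultimately show "x \<in> {enat k | k. \<exists>U :: nat \<Rightarrow> _ set.
      topspace B' \<subseteq> (\<Union>i<k. U i) \<and>
      (\<forall>i<k. openin B' (U i) \<and> (\<exists>s. continuous_map (subtopology B' (U i)) E' s \<and> (\<forall>b\<in>U i. p' (s b) = b)))}"
    unfolding x by blast
qed

lemma openin_Ball_finite:
  assumes "finite J" "\<And>j. j \<in> J \<Longrightarrow> openin T {t \<in> topspace T. P j t}"
  shows "openin T {t \<in> topspace T. \<forall>j\<in>J. P j t}"
proof -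
  have "{t \<in> topspace T. \<forall>j\<in>J. P j t} = (\<Inter>j\<in>J. {t \<in> topspace T. P j t}) \<inter> topspace T"
    by auto
  then show ?thesis using openin_INT[OF assms] by simp
qed

lemma openin_discrete_fibre:
  assumes "continuous_map T (discrete_topology S) H"
  shows "openin T {t \<in> topspace T. H t = a}"
proof -
  have "openin T {t \<in> topspace T. H t \<in> {a} \<inter> S}"
    by (rule openin_continuous_map_preimage[OF assms]) simp
  moreover have "{t \<in> topspace T. H t \<in> {a} \<inter> S} = {t \<in> topspace T. H t = a}"
    using continuous_map_image_subset_topspace[OF assms] by auto
  ultimately show ?thesis by simp
qed

lemma continuous_map_discrete_binop:
  assumes "continuous_map T (discrete_topology S) H1" "continuous_map T (discrete_topology S) H2"
    and "\<And>a b. a \<in> S \<Longrightarrow> b \<in> S \<Longrightarrow> \<phi> a b \<in> S'"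
  shows "continuous_map T (discrete_topology S') (\<lambda>t. \<phi> (H1 t) (H2 t))"
proof -
  have "continuous_map T (discrete_topology (S \<times> S)) (\<lambda>t. (H1 t, H2 t))"
    using assms(1,2) by (simp add: prod_topology_discrete_topology continuous_map_paired)
  moreover have "continuous_map (discrete_topology (S \<times> S)) (discrete_topology S') (case_prod \<phi>)"
    using assms(3) by auto
  ultimately have "continuous_map T (discrete_topology S') (case_prod \<phi> \<circ> (\<lambda>t. (H1 t, H2 t)))"
    by (rule continuous_map_compose)
  then show ?thesis by (simp add: o_def)
qed

lemma topspace_power_top: "topspace (power_top X n) = PiE {..<n} (\<lambda>_. topspace X)"
  unfolding power_top_def by simp

lemma continuous_map_power_top_proj: "i < n \<Longrightarrow> continuous_map (power_top X n) X (\<lambda>x. x i)"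
  unfolding power_top_def using continuous_map_product_projection[of i "{..<n}" "\<lambda>i. X"] by simp

lemma topspace_multipath_space:
  "topspace (multipath_space X n) =
     {\<alpha> \<in> PiE {..<n} (\<lambda>_. paths X). \<forall>i<n. \<forall>j<n. \<alpha> i 0 = \<alpha> j 0}"
  unfolding multipath_space_def by (simp add: topspace_power_top, blast)

lemma continuous_map_multipath_space_iff:
  "continuous_map T (multipath_space X n) s \<longleftrightarrow>
     (\<forall>i<n. continuous_map T (path_space X) (\<lambda>t. s t i)) \<and>
     (\<forall>t\<in>topspace T. s t \<in> extensional {..<n} \<and> (\<forall>i<n. \<forall>j<n. s t i 0 = s t j 0))"
    (is "_ \<longleftrightarrow> ?paths \<and> ?pointwise")
proof -
  have power: "continuous_map T (power_top (path_space X) n) s \<longleftrightarrow>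
      ?paths \<and> (\<forall>t\<in>topspace T. s t \<in> extensional {..<n})"
    unfolding power_top_def continuous_map_componentwise by auto
  show ?thesis
  proof
    assume s: "continuous_map T (multipath_space X n) s"
    then have "continuous_map T (power_top (path_space X) n) s"
      unfolding multipath_space_def continuous_map_in_subtopology by blast
    moreover have "s ` topspace T \<subseteq> topspace (multipath_space X n)"
      using continuous_map_image_subset_topspace[OF s] .
    ultimately show "?paths \<and> ?pointwise"
      using power unfolding topspace_multipath_space by blast
  next
    assume R: "?paths \<and> ?pointwise"
    then have s: "continuous_map T (power_top (path_space X) n) s"
      using power by blast
    moreover have "s ` topspace T \<subseteq> topspace (power_top (path_space X) n)"
      using continuous_map_image_subset_topspace[OF s] .
    ultimately show "continuous_map T (multipath_space X n) s"
      using R unfolding multipath_space_def continuous_map_in_subtopology by blast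
  qed
qed

lemma continuous_map_multipath_path_map:
  assumes h: "continuous_map X Y h"
  shows "continuous_map (multipath_space X n) (multipath_space Y n)
           (\<lambda>\<alpha>. \<lambda>i\<in>{..<n}. path_map h (\<alpha> i))"
  unfolding continuous_map_multipath_space_iff[of _ Y]
proof (intro conjI allI impI ballI)
  fix i assume i: "i < n"
  have "continuous_map (multipath_space X n) (path_space X) (\<lambda>\<alpha>. \<alpha> i)"
    using conjunct1[OF continuous_map_id[of "multipath_space X n", unfolded id_def
                         continuous_map_multipath_space_iff]] i by blast
  then have "continuous_map (multipath_space X n) (path_space Y) (path_map h \<circ> (\<lambda>\<alpha>. \<alpha> i))"
    using continuous_map_path_map[OF h] by (rule continuous_map_compose)
  then show "continuous_map (multipath_space X n) (path_space Y) (\<lambda>\<alpha>. (\<lambda>i\<in>{..<n}. path_map h (\<alpha> i)) i)"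
    using i by (simp add: o_def)
next
  fix \<alpha> i j assume "\<alpha> \<in> topspace (multipath_space X n)" and ij: "i < n" "j < n"
  then have "\<alpha> i 0 = \<alpha> j 0" unfolding topspace_multipath_space by blast
  then show "(\<lambda>i\<in>{..<n}. path_map h (\<alpha> i)) i 0 = (\<lambda>i\<in>{..<n}. path_map h (\<alpha> i)) j 0"
    using ij by (simp add: path_map_def)
qed simp

lemma continuous_map_multipath_G_spaceI:
  assumes paths: "continuous_map T (power_top (path_space X) n) (\<lambda>t. fst (s t))"
    and elements: "continuous_map T (power_top (discrete_topology (carrier G)) (n - 1)) (\<lambda>t. snd (s t))"
    and linked: "\<And>t i. t \<in> topspace T \<Longrightarrow> i < n - 1 \<Longrightarrow>
                   act (fst (s t) i 0) (snd (s t) i) = fst (s t) (Suc i) 0"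
  shows "continuous_map T (multipath_G_space X G act n) s"
proof -
  let ?P = "prod_topology (power_top (path_space X) n) (power_top (discrete_topology (carrier G)) (n - 1))"
  have s: "continuous_map T ?P s"
    using paths elements unfolding continuous_map_pairwise o_def by simp
  have "s \<in> topspace T \<rightarrow> {(\<alpha>, g) \<in> topspace ?P. \<forall>i < n - 1. act (\<alpha> i 0) (g i) = \<alpha> (Suc i) 0}"
  proof
    fix t assume t: "t \<in> topspace T"
    have "s t \<in> topspace ?P" using continuous_map_image_subset_topspace[OF s] t by blast
    then show "s t \<in> {(\<alpha>, g) \<in> topspace ?P. \<forall>i < n - 1. act (\<alpha> i 0) (g i) = \<alpha> (Suc i) 0}"
      using linked[OF t] by (simp add: case_prod_beta mem_Times_iff)
  qed
  then show ?thesis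
    using s unfolding multipath_G_space_def Let_def continuous_map_in_subtopology by blast
qed

section \<open>Subdivisions of the unit interval\<close>

definition subinterval :: "nat \<Rightarrow> nat \<Rightarrow> real set" where
  "subinterval m j = {real j / real m .. real (Suc j) / real m}"

lemma subinterval_bounds: "real j / real m \<le> real (Suc j) / real m"
  by (simp add: divide_right_mono)

lemma left_mem_subinterval [simp]: "real j / real m \<in> subinterval m j"
  and right_mem_subinterval [simp]: "real (Suc j) / real m \<in> subinterval m j"
  using subinterval_bounds by (auto simp: subinterval_def)

lemma compact_subinterval [simp]: "compact (subinterval m j)"
  by (simp add: subinterval_def)

lemma subinterval_subset: "j < m \<Longrightarrow> subinterval m j \<subseteq> {0..1}"
  by (auto simp: subinterval_def divide_simps)

lemma subinterval_cover:
  assumes "s \<in> {0..1::real}" "m > 0"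
  shows "\<exists>j<m. s \<in> subinterval m j"
proof (cases "s = 1")
  case True
  have "s \<in> subinterval m (m - 1)"
    using True assms by (simp add: subinterval_def Suc_diff_1 of_nat_diff divide_simps)
  then show ?thesis using assms by (intro exI[of _ "m - 1"]) simp
next
  case False
  define j where "j = nat \<lfloor>s * real m\<rfloor>"
  have s: "0 \<le> s" "s < 1" using assms False by auto
  have floor: "real j \<le> s * real m" "s * real m < real j + 1"
    unfolding j_def using s assms by (auto simp: of_nat_nat)
  have "real j < real m" using floor s assms
    by (smt (verit) mult_less_cancel_right2 of_nat_0_less_iff)
  then have "j < m" by simp
  moreover have "s \<in> subinterval m j"
    using floor assms by (auto simp: subinterval_def divide_simps)
  ultimately show ?thesis by blast
qed

lemma subinterval_partition:
  assumes f: "continuous_map (top_of_set {0..1}) Y f"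
    and cover: "\<And>t. t \<in> {0..1} \<Longrightarrow> \<exists>i. P i \<and> openin Y (N i) \<and> f t \<in> N i"
  shows "\<exists>m>0. \<forall>j<m. \<exists>i. P i \<and> f ` subinterval m j \<subseteq> N i"
proof -
  define C where "C = {W. open W \<and> (\<exists>i. P i \<and> (\<forall>t\<in>{0..1} \<inter> W. f t \<in> N i))}"
  have cover_C: "{0..1} \<subseteq> \<Union>C"
  proof
    fix t :: real assume t: "t \<in> {0..1}"
    obtain i where i: "P i" "openin Y (N i)" "f t \<in> N i" using cover[OF t] by blast
    have "openin (top_of_set {0..1}) {s \<in> topspace (top_of_set {0..1}). f s \<in> N i}"
      by (rule openin_continuous_map_preimage[OF f i(2)])
    then obtain W where W: "open W" "{s \<in> {0..1}. f s \<in> N i} = {0..1} \<inter> W"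
      unfolding openin_open by force
    then have "W \<in> C" unfolding C_def using i by blast
    then show "t \<in> \<Union>C" using W t i by blast
  qed
  moreover have "C \<noteq> {}" using cover_C by auto
  moreover have "open W" if "W \<in> C" for W using that unfolding C_def by blast
  ultimately obtain d where d: "0 < d" "\<And>T. T \<subseteq> {0..1} \<Longrightarrow> diameter T < d \<Longrightarrow> \<exists>B\<in>C. T \<subseteq> B"
    by (metis Lebesgue_number_lemma[OF compact_Icc])
  obtain m where m: "m > 0" "inverse (real m) < d"
    using reals_Archimedean[OF d(1)] by (metis zero_less_Suc)
  have "\<exists>i. P i \<and> f ` subinterval m j \<subseteq> N i" if j: "j < m" for j
  proof -
    have "real (Suc j) / real m - real j / real m = inverse (real m)"
      using m by (simp add: divide_simps)
    then have "diameter (subinterval m j) < d"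
      using m subinterval_bounds[of j m] by (simp add: subinterval_def divide_simps)
    then obtain W where "W \<in> C" "subinterval m j \<subseteq> W"
      using d(2)[OF subinterval_subset[OF j]] by blast
    then show ?thesis using subinterval_subset[OF j] unfolding C_def by blast
  qed
  then show ?thesis using m by blast
qed

lemma continuous_map_glue_interval:
  fixes a b :: real
  assumes ab: "0 \<le> a" "a \<le> b"
    and f: "continuous_map (top_of_set {0..a}) Y f" and g: "continuous_map (top_of_set {a..b}) Y g"
    and fg: "f a = g a"
  shows "continuous_map (top_of_set {0..b}) Y (\<lambda>t. if t \<le> a then f t else g t)"
proof (rule continuous_map_cases_le)
  have "{0..b} \<inter> {t \<in> topspace (top_of_set {0..b}). t \<le> a} = {0..a}" using ab by auto
  then show "continuous_map (subtopology (top_of_set {0..b}) {t \<in> topspace (top_of_set {0..b}). t \<le> a}) Y f"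
    by (simp only: subtopology_subtopology f)
  have "{0..b} \<inter> {t \<in> topspace (top_of_set {0..b}). a \<le> t} = {a..b}" using ab by auto
  then show "continuous_map (subtopology (top_of_set {0..b}) {t \<in> topspace (top_of_set {0..b}). a \<le> t}) Y g"
    by (simp only: subtopology_subtopology g)
qed (use fg in simp_all)

section \<open>Free actions of finite groups\<close>

locale free_finite_action =
  fixes X :: "'a topology" and G :: "('g, 'm) monoid_scheme" and act :: "'a \<Rightarrow> 'g \<Rightarrow> 'a"
  assumes free: "free_action G X act"
    and finite_group: "finite (carrier G)"
    and Hausdorff: "Hausdorff_space X"

sublocale free_finite_action \<subseteq> G: group G
  using free unfolding free_action_def right_action_def by blast

context free_finite_action
begin

abbreviation "orb \<equiv> orbit_map G act"
abbreviation "Q \<equiv> orbit_space X G act"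

lemma continuous_map_act: "g \<in> carrier G \<Longrightarrow> continuous_map X X (\<lambda>x. act x g)"
  using free unfolding free_action_def right_action_def by blast

lemma act_in_topspace: "x \<in> topspace X \<Longrightarrow> g \<in> carrier G \<Longrightarrow> act x g \<in> topspace X"
  using continuous_map_act continuous_map_image_subset_topspace by fastforce

lemma act_one: "x \<in> topspace X \<Longrightarrow> act x \<one>\<^bsub>G\<^esub> = x"
  using free unfolding free_action_def right_action_def by blast

lemma act_mult:
  "x \<in> topspace X \<Longrightarrow> g \<in> carrier G \<Longrightarrow> h \<in> carrier G \<Longrightarrow> act (act x g) h = act x (g \<otimes>\<^bsub>G\<^esub> h)"
  using free unfolding free_action_def right_action_def by blast

lemma act_fixed_imp_one: "x \<in> topspace X \<Longrightarrow> g \<in> carrier G \<Longrightarrow> act x g = x \<Longrightarrow> g = \<one>\<^bsub>G\<^esub>"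
  using free unfolding free_action_def by blast

lemma act_act_inv: "x \<in> topspace X \<Longrightarrow> g \<in> carrier G \<Longrightarrow> act (act x g) (inv\<^bsub>G\<^esub> g) = x"
  by (simp add: act_mult act_one)

lemma act_inv_act: "x \<in> topspace X \<Longrightarrow> g \<in> carrier G \<Longrightarrow> act (act x (inv\<^bsub>G\<^esub> g)) g = x"
  by (simp add: act_mult act_one)

lemma act_act_inv_mult:
  assumes "x \<in> topspace X" "h \<in> carrier G" "k \<in> carrier G"
  shows "act (act x h) (inv\<^bsub>G\<^esub> h \<otimes>\<^bsub>G\<^esub> k) = act x k"
proof -
  have "act (act x h) (inv\<^bsub>G\<^esub> h \<otimes>\<^bsub>G\<^esub> k) = act x (h \<otimes>\<^bsub>G\<^esub> (inv\<^bsub>G\<^esub> h \<otimes>\<^bsub>G\<^esub> k))"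
    using assms act_mult by simp
  also have "h \<otimes>\<^bsub>G\<^esub> (inv\<^bsub>G\<^esub> h \<otimes>\<^bsub>G\<^esub> k) = k"
    using assms(2,3) by (simp add: G.m_assoc[symmetric])
  finally show ?thesis .
qed

lemma act_left_cancel:
  assumes x: "x \<in> topspace X" and g: "g \<in> carrier G" and h: "h \<in> carrier G"
    and eq: "act x g = act x h"
  shows "g = h"
proof -
  have "act x (g \<otimes>\<^bsub>G\<^esub> inv\<^bsub>G\<^esub> h) = x"
    using act_mult[OF x g, of "inv\<^bsub>G\<^esub> h"] act_act_inv[OF x h] eq h by simp
  then have "g \<otimes>\<^bsub>G\<^esub> inv\<^bsub>G\<^esub> h = \<one>\<^bsub>G\<^esub>"
    using act_fixed_imp_one x g h by simp
  then show ?thesis using g h by (metis G.inv_equality G.inv_inv G.inv_closed G.r_inv G.m_closed)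
qed

lemma openin_orbit_space:
  "openin Q U \<longleftrightarrow> U \<subseteq> orb ` topspace X \<and> openin X {x \<in> topspace X. orb x \<in> U}"
  unfolding orbit_space_def quotient_top_def
  by (simp only: topology_inverse'[OF istopology_quotient_top])

lemma topspace_orbit_space: "topspace Q = orb ` topspace X"
proof -
  have "{x \<in> topspace X. orb x \<in> orb ` topspace X} = topspace X" by blast
  then have "openin Q (orb ` topspace X)" unfolding openin_orbit_space by simp
  then show ?thesis using openin_subset openin_orbit_space[of "topspace Q"] by blast
qed

lemma continuous_map_orb: "continuous_map X Q orb"
  unfolding continuous_map_def topspace_orbit_space using openin_orbit_space by blast

lemma orb_eq_iff:
  assumes "x \<in> topspace X" "y \<in> topspace X"
  shows "orb x = orb y \<longleftrightarrow> (\<exists>g\<in>carrier G. act x g = y)"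
proof
  assume "orb x = orb y"
  moreover have "y \<in> orb y" unfolding orbit_map_def using act_one[OF assms(2)] by force
  ultimately have "y \<in> (\<lambda>g. act x g) ` carrier G" unfolding orbit_map_def by simp
  then show "\<exists>g\<in>carrier G. act x g = y" by blast
next
  assume "\<exists>g\<in>carrier G. act x g = y"
  then obtain g where g: "g \<in> carrier G" "act x g = y" by blast
  have x_to_y: "act x h = act y (inv\<^bsub>G\<^esub> g \<otimes>\<^bsub>G\<^esub> h)" if h: "h \<in> carrier G" for h
    using act_act_inv_mult[OF assms(1) g(1) h] g(2) by simp
  have y_to_x: "act y h = act x (g \<otimes>\<^bsub>G\<^esub> h)" if "h \<in> carrier G" for h
    using act_mult[OF assms(1) g(1) that] g(2) by simp
  show "orb x = orb y"
    unfolding orbit_map_def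
  proof (intro equalityI image_subsetI)
    fix h assume h: "h \<in> carrier G"
    show "act x h \<in> (\<lambda>g. act y g) ` carrier G"
      using x_to_y[OF h] g(1) h by (intro image_eqI[of _ "\<lambda>g. act y g" "inv\<^bsub>G\<^esub> g \<otimes>\<^bsub>G\<^esub> h"]) simp_all
    show "act y h \<in> (\<lambda>g. act x g) ` carrier G"
      using y_to_x[OF h] g(1) h by (intro image_eqI[of _ "\<lambda>g. act x g" "g \<otimes>\<^bsub>G\<^esub> h"]) simp_all
  qed
qed

lemma orb_act: "x \<in> topspace X \<Longrightarrow> g \<in> carrier G \<Longrightarrow> orb (act x g) = orb x"
  using orb_eq_iff act_in_topspace by metis

lemma openin_orb_image:
  assumes U: "openin X U" shows "openin Q (orb ` U)"
  unfolding openin_orbit_space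
proof
  show "orb ` U \<subseteq> orb ` topspace X" using openin_subset[OF U] by blast
  have "{x \<in> topspace X. orb x \<in> orb ` U} = (\<Union>g\<in>carrier G. {x \<in> topspace X. act x g \<in> U})"
  proof safe
    fix x u assume "x \<in> topspace X" "u \<in> U" "orb x = orb u"
    then obtain g where "g \<in> carrier G" "act x g = u"
      using orb_eq_iff[of x u] openin_subset[OF U] by blast
    with \<open>x \<in> topspace X\<close> \<open>u \<in> U\<close> show "x \<in> (\<Union>g\<in>carrier G. {x \<in> topspace X. act x g \<in> U})"
      by blast
  next
    fix x g assume "x \<in> topspace X" "g \<in> carrier G" "act x g \<in> U"
    then show "orb x \<in> orb ` U" using orb_act by (metis image_eqI)
  qed
  moreover have "openin X (\<Union>g\<in>carrier G. {x \<in> topspace X. act x g \<in> U})"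
    using openin_continuous_map_preimage[OF continuous_map_act U] by blast
  ultimately show "openin X {x \<in> topspace X. orb x \<in> orb ` U}" by simp
qed

text \<open>Sheets are the slices over evenly covered open sets of the covering map X \<rightarrow> X/G.\<close>
definition sheet :: "'a set \<Rightarrow> bool" where
  "sheet N \<longleftrightarrow> openin X N \<and> inj_on orb N"

lemma exists_separations_from_translates:
  assumes y: "y \<in> topspace X"
  obtains A B where "\<And>g. g \<in> carrier G - {\<one>\<^bsub>G\<^esub>} \<Longrightarrow>
    openin X (A g) \<and> openin X (B g) \<and> y \<in> A g \<and> act y g \<in> B g \<and> disjnt (A g) (B g)"
proof -
  have "\<forall>g\<in>carrier G - {\<one>\<^bsub>G\<^esub>}. \<exists>A B. openin X A \<and> openin X B \<and> y \<in> A \<and> act y g \<in> B \<and> disjnt A B"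
  proof
    fix g assume g: "g \<in> carrier G - {\<one>\<^bsub>G\<^esub>}"
    have "y \<noteq> act y g" using act_fixed_imp_one y g by force
    then show "\<exists>A B. openin X A \<and> openin X B \<and> y \<in> A \<and> act y g \<in> B \<and> disjnt A B"
      using Hausdorff y act_in_topspace g unfolding Hausdorff_space_def by (metis DiffD1)
  qed
  from bchoice[OF this] obtain A where "\<forall>g\<in>carrier G - {\<one>\<^bsub>G\<^esub>}. \<exists>B. openin X (A g) \<and> openin X B \<and>
      y \<in> A g \<and> act y g \<in> B \<and> disjnt (A g) B"
    by blast
  from bchoice[OF this] show ?thesis using that by blast
qed

lemma exists_sheet:
  assumes y: "y \<in> topspace X" shows "\<exists>N. sheet N \<and> y \<in> N"
proof -
  obtain A B where AB: "\<And>g. g \<in> carrier G - {\<one>\<^bsub>G\<^esub>} \<Longrightarrow>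
      openin X (A g) \<and> openin X (B g) \<and> y \<in> A g \<and> act y g \<in> B g \<and> disjnt (A g) (B g)"
    using exists_separations_from_translates[OF y] by blast
  define N where "N = {x \<in> topspace X. \<forall>g\<in>carrier G - {\<one>\<^bsub>G\<^esub>}. x \<in> A g \<and> act x g \<in> B g}"
  have "openin X N" unfolding N_def
  proof (rule openin_Ball_finite)
    show "finite (carrier G - {\<one>\<^bsub>G\<^esub>})" using finite_group by simp
    fix g assume g: "g \<in> carrier G - {\<one>\<^bsub>G\<^esub>}"
    have "{x \<in> topspace X. x \<in> A g \<and> act x g \<in> B g} = A g \<inter> {x \<in> topspace X. act x g \<in> B g}"
      using AB[OF g] openin_subset by blast
    moreover have "openin X {x \<in> topspace X. act x g \<in> B g}"
      using openin_continuous_map_preimage[OF continuous_map_act] AB[OF g] g by blast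
    ultimately show "openin X {x \<in> topspace X. x \<in> A g \<and> act x g \<in> B g}"
      using AB[OF g] by auto
  qed
  moreover have "inj_on orb N"
  proof (rule inj_onI)
    fix u v assume u: "u \<in> N" and v: "v \<in> N" and "orb u = orb v"
    moreover have "u \<in> topspace X" "v \<in> topspace X" using u v unfolding N_def by auto
    ultimately obtain g where g: "g \<in> carrier G" "act u g = v" using orb_eq_iff by blast
    show "u = v"
    proof (cases "g = \<one>\<^bsub>G\<^esub>")
      case True then show ?thesis using g act_one u unfolding N_def by auto
    next
      case False
      then have "act u g \<in> B g" "v \<in> A g" using u v g unfolding N_def by auto
      then show ?thesis using AB[of g] g False unfolding disjnt_def by auto
    qed
  qed
  moreover have "y \<in> N" unfolding N_def using AB y by auto
  ultimately show ?thesis unfolding sheet_def by blast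
qed

lemma sheet_translate:
  assumes N: "sheet N" and z: "z \<in> topspace X" "orb z \<in> orb ` N"
  shows "\<exists>N'. sheet N' \<and> z \<in> N' \<and> orb ` N \<subseteq> orb ` N'"
proof -
  have NX: "N \<subseteq> topspace X" using N openin_subset unfolding sheet_def by blast
  obtain u where u: "u \<in> N" "orb z = orb u" using z by blast
  then obtain g where g: "g \<in> carrier G" "act z g = u" using orb_eq_iff z NX by blast
  define N' where "N' = {w \<in> topspace X. act w g \<in> N}"
  have "openin X N'" unfolding N'_def
    using openin_continuous_map_preimage[OF continuous_map_act[OF g(1)]] N unfolding sheet_def by blast
  moreover have "inj_on orb N'"
  proof (rule inj_onI)
    fix w1 w2 assume w: "w1 \<in> N'" "w2 \<in> N'" "orb w1 = orb w2"
    then have "orb (act w1 g) = orb (act w2 g)" using orb_act g unfolding N'_def by auto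
    then have "act w1 g = act w2 g" using N w unfolding sheet_def N'_def inj_on_def by blast
    then show "w1 = w2" using act_act_inv g w unfolding N'_def by (metis (no_types, lifting) mem_Collect_eq)
  qed
  moreover have "z \<in> N'" unfolding N'_def using z g u by auto
  moreover have "orb ` N \<subseteq> orb ` N'"
  proof
    fix v assume "v \<in> orb ` N"
    then obtain w where w: "w \<in> N" "v = orb w" by blast
    have "act w (inv\<^bsub>G\<^esub> g) \<in> N'" "orb (act w (inv\<^bsub>G\<^esub> g)) = orb w"
      using w NX g act_inv_act act_in_topspace orb_act unfolding N'_def by auto
    then show "v \<in> orb ` N'" using w by (metis image_eqI)
  qed
  ultimately show ?thesis unfolding sheet_def by blast
qed

lemma sheet_inverse_orb: "sheet N \<Longrightarrow> u \<in> N \<Longrightarrow> inv_into N orb (orb u) = u"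
  unfolding sheet_def by (simp add: inv_into_f_f)

lemma sheet_inverse_in: "v \<in> orb ` N \<Longrightarrow> inv_into N orb v \<in> N \<and> orb (inv_into N orb v) = v"
  by (simp add: inv_into_into f_inv_into_f)

lemma continuous_map_sheet_inverse:
  assumes N: "sheet N"
  shows "continuous_map (subtopology Q (orb ` N)) X (inv_into N orb)"
proof -
  have NX: "N \<subseteq> topspace X" using N openin_subset unfolding sheet_def by blast
  have top: "topspace (subtopology Q (orb ` N)) = orb ` N"
    using NX by (auto simp: topspace_orbit_space)
  show ?thesis
    unfolding continuous_map_def
  proof (intro conjI allI impI)
    show "inv_into N orb \<in> topspace (subtopology Q (orb ` N)) \<rightarrow> topspace X"
      unfolding top using NX sheet_inverse_in by blast
  next
    fix U assume U: "openin X U"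
    have "{v \<in> topspace (subtopology Q (orb ` N)). inv_into N orb v \<in> U} = orb ` (N \<inter> U)"
      unfolding top
    proof (intro equalityI subsetI)
      fix v assume "v \<in> {v \<in> orb ` N. inv_into N orb v \<in> U}"
      then show "v \<in> orb ` (N \<inter> U)" using sheet_inverse_in[of v N] by (metis (lifting) IntI image_eqI mem_Collect_eq)
    next
      fix v assume "v \<in> orb ` (N \<inter> U)"
      then obtain u where "u \<in> N" "u \<in> U" "v = orb u" by blast
      then show "v \<in> {v \<in> orb ` N. inv_into N orb v \<in> U}" using sheet_inverse_orb[OF N] by simp
    qed
    moreover have "openin (subtopology Q (orb ` N)) (orb ` (N \<inter> U) \<inter> orb ` N)"
      using openin_orb_image N U unfolding sheet_def by (blast intro: openin_subtopology_Int)
    moreover have "orb ` (N \<inter> U) \<inter> orb ` N = orb ` (N \<inter> U)" by blast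
    ultimately show "openin (subtopology Q (orb ` N)) {v \<in> topspace (subtopology Q (orb ` N)). inv_into N orb v \<in> U}"
      by simp
  qed
qed

lemma shift_locally_constant:
  assumes F1: "continuous_map T X F1" and F2: "continuous_map T X F2"
    and same_orbit: "\<And>t. t \<in> topspace T \<Longrightarrow> orb (F1 t) = orb (F2 t)"
    and t0: "t0 \<in> topspace T" and g0: "g0 \<in> carrier G" "act (F1 t0) g0 = F2 t0"
  shows "\<exists>W. openin T W \<and> t0 \<in> W \<and> (\<forall>t\<in>W. \<forall>g\<in>carrier G. act (F1 t) g = F2 t \<longrightarrow> g = g0)"
proof -
  have F1_top: "F1 t \<in> topspace X" and F2_top: "F2 t \<in> topspace X" if "t \<in> topspace T" for t
    using that continuous_map_image_subset_topspace[OF F1] continuous_map_image_subset_topspace[OF F2]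
    by auto
  obtain N where N: "sheet N" "F2 t0 \<in> N" using exists_sheet F2_top[OF t0] by blast
  then have N_open: "openin X N" unfolding sheet_def by blast
  define W where "W = {t \<in> topspace T. F2 t \<in> N} \<inter>
      {t \<in> topspace T. F1 t \<in> {x \<in> topspace X. act x g0 \<in> N}}"
  have "openin T W" unfolding W_def
    by (intro openin_Int openin_continuous_map_preimage[OF F2 N_open]
        openin_continuous_map_preimage[OF F1]
        openin_continuous_map_preimage[OF continuous_map_act[OF g0(1)] N_open])
  moreover have "t0 \<in> W" unfolding W_def using t0 F1_top g0 N by auto
  moreover have "g = g0" if t: "t \<in> W" and g: "g \<in> carrier G" "act (F1 t) g = F2 t" for t g
  proof -
    have tT: "t \<in> topspace T" using t unfolding W_def by simp
    have "orb (act (F1 t) g0) = orb (F2 t)"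
      using orb_act[OF F1_top[OF tT] g0(1)] same_orbit[OF tT] by simp
    moreover have "act (F1 t) g0 \<in> N" "F2 t \<in> N" using t unfolding W_def by auto
    ultimately have "act (F1 t) g0 = act (F1 t) g"
      using N(1) g(2) unfolding sheet_def inj_on_def by metis
    then show "g = g0" using act_left_cancel F1_top[OF tT] g0(1) g(1) by metis
  qed
  ultimately show ?thesis by blast
qed

lemma exists_continuous_shift:
  assumes F1: "continuous_map T X F1" and F2: "continuous_map T X F2"
    and same_orbit: "\<And>t. t \<in> topspace T \<Longrightarrow> orb (F1 t) = orb (F2 t)"
  shows "\<exists>H. continuous_map T (discrete_topology (carrier G)) H \<and>
             (\<forall>t\<in>topspace T. act (F1 t) (H t) = F2 t)"
proof -
  define H where "H t = (SOME g. g \<in> carrier G \<and> act (F1 t) g = F2 t)" for t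
  have H: "H t \<in> carrier G \<and> act (F1 t) (H t) = F2 t" if t: "t \<in> topspace T" for t
  proof -
    have "F1 t \<in> topspace X" "F2 t \<in> topspace X"
      using t continuous_map_image_subset_topspace[OF F1] continuous_map_image_subset_topspace[OF F2]
      by auto
    then have "\<exists>g. g \<in> carrier G \<and> act (F1 t) g = F2 t" using orb_eq_iff same_orbit[OF t] by blast
    then show ?thesis unfolding H_def by (rule someI_ex)
  qed
  have "openin T {t \<in> topspace T. H t \<in> U}" for U
  proof (subst openin_subopen, intro ballI)
    fix t0 assume t0: "t0 \<in> {t \<in> topspace T. H t \<in> U}"
    then have t0T: "t0 \<in> topspace T" by simp
    obtain W where W: "openin T W" "t0 \<in> W"
      and const: "\<forall>t\<in>W. \<forall>g\<in>carrier G. act (F1 t) g = F2 t \<longrightarrow> g = H t0"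
      using shift_locally_constant[OF F1 F2 same_orbit t0T conjunct1[OF H[OF t0T]] conjunct2[OF H[OF t0T]]]
      by blast
    have "H t = H t0" if "t \<in> W" for t
      using const H[of t] openin_subset[OF W(1)] that by blast
    then have "W \<subseteq> {t \<in> topspace T. H t \<in> U}"
      using openin_subset[OF W(1)] t0 by auto
    then show "\<exists>W. openin T W \<and> t0 \<in> W \<and> W \<subseteq> {t \<in> topspace T. H t \<in> U}" using W by blast
  qed
  then have "continuous_map T (discrete_topology (carrier G)) H"
    unfolding continuous_map_def using H by auto
  then show ?thesis using H by blast
qed

lemma exists_continuous_shifts:
  assumes F: "\<And>i. i < n \<Longrightarrow> continuous_map T X (\<lambda>t. F t i)"
    and E: "\<And>i. i < n \<Longrightarrow> continuous_map T X (\<lambda>t. E t i)"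
    and same_orbit: "\<And>t i. t \<in> topspace T \<Longrightarrow> i < n \<Longrightarrow> orb (F t i) = orb (E t i)"
  obtains H where "\<And>i. i < n \<Longrightarrow> continuous_map T (discrete_topology (carrier G)) (H i)"
    and "\<And>i t. i < n \<Longrightarrow> t \<in> topspace T \<Longrightarrow> act (F t i) (H i t) = E t i"
proof -
  have "\<forall>i\<in>{..<n}. \<exists>H. continuous_map T (discrete_topology (carrier G)) H \<and>
      (\<forall>t\<in>topspace T. act (F t i) (H t) = E t i)"
  proof
    fix i assume "i \<in> {..<n}"
    then have i: "i < n" by simp
    show "\<exists>H. continuous_map T (discrete_topology (carrier G)) H \<and>
        (\<forall>t\<in>topspace T. act (F t i) (H t) = E t i)"
      by (rule exists_continuous_shift[OF F[OF i] E[OF i] same_orbit[OF _ i]])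
  qed
  from bchoice[OF this] obtain H where "\<forall>i\<in>{..<n}. continuous_map T (discrete_topology (carrier G)) (H i) \<and>
      (\<forall>t\<in>topspace T. act (F t i) (H i t) = E t i)"
    by blast
  then show ?thesis by (intro that) auto
qed

lemma continuous_map_act_path:
  assumes A: "continuous_map T (path_space X) A"
    and H: "continuous_map T (discrete_topology (carrier G)) H"
  shows "continuous_map T (path_space X) (\<lambda>t. path_map (\<lambda>x. act x (H t)) (A t))"
proof (rule continuous_map_path_spaceI)
  have H_carrier: "H t \<in> carrier G" if "t \<in> topspace T" for t
    using continuous_map_image_subset_topspace[OF H] that by auto
  show "path_map (\<lambda>x. act x (H t)) (A t) \<in> paths X" if "t \<in> topspace T" for t
    using path_map_paths[OF continuous_map_act[OF H_carrier] continuous_map_path_space_paths[OF A]] that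
    by blast
  fix K :: "real set" and V assume KV: "compact K" "K \<subseteq> {0..1}" "openin X V"
  show "openin T {t \<in> topspace T. path_map (\<lambda>x. act x (H t)) (A t) ` K \<subseteq> V}"
  proof (subst openin_subopen, intro ballI)
    fix t0 assume t0: "t0 \<in> {t \<in> topspace T. path_map (\<lambda>x. act x (H t)) (A t) ` K \<subseteq> V}"
    then have t0T: "t0 \<in> topspace T" by simp
    define W where "W = {t \<in> topspace T. H t = H t0} \<inter>
        {t \<in> topspace T. A t ` K \<subseteq> {x \<in> topspace X. act x (H t0) \<in> V}}"
    have "openin T W" unfolding W_def
      by (intro openin_Int openin_discrete_fibre[OF H] openin_path_space_preimage[OF A KV(1,2)]
          openin_continuous_map_preimage[OF continuous_map_act[OF H_carrier[OF t0T]] KV(3)])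
    moreover have "A t s \<in> topspace X" if "t \<in> topspace T" "s \<in> K" for t s
      using paths_in_topspace[OF continuous_map_path_space_paths[OF A that(1)]] KV(2) that(2) by auto
    then have "t0 \<in> W" unfolding W_def using t0 t0T KV(2) by (auto simp: path_map_def subset_iff)
    moreover have "W \<subseteq> {t \<in> topspace T. path_map (\<lambda>x. act x (H t)) (A t) ` K \<subseteq> V}"
      unfolding W_def using KV(2) by (auto simp: path_map_def subset_iff)
    ultimately show "\<exists>W. openin T W \<and> t0 \<in> W \<and>
        W \<subseteq> {t \<in> topspace T. path_map (\<lambda>x. act x (H t)) (A t) ` K \<subseteq> V}"
      by blast
  qed
qed

subsection \<open>Path lifting\<close>

lemma lifts_agree:
  assumes T: "connected_space T"
    and f1: "continuous_map T X f1" and f2: "continuous_map T X f2"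
    and same_orbit: "\<And>t. t \<in> topspace T \<Longrightarrow> orb (f1 t) = orb (f2 t)"
    and t0: "t0 \<in> topspace T" "f1 t0 = f2 t0"
    and t: "t \<in> topspace T"
  shows "f1 t = f2 t"
proof -
  define A where "A = {t \<in> topspace T. f1 t = f2 t}"
  have "closedin T A" unfolding A_def by (rule closedin_continuous_maps_eq[OF Hausdorff f1 f2])
  moreover have "openin T A"
  proof (subst openin_subopen, intro ballI)
    fix s assume s: "s \<in> A"
    then have sT: "s \<in> topspace T" unfolding A_def by simp
    obtain N where N: "sheet N" "f1 s \<in> N"
      using exists_sheet continuous_map_image_subset_topspace[OF f1] sT by blast
    then have N_open: "openin X N" unfolding sheet_def by blast
    define W where "W = {t \<in> topspace T. f1 t \<in> N} \<inter> {t \<in> topspace T. f2 t \<in> N}"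
    have "openin T W" unfolding W_def
      by (intro openin_Int openin_continuous_map_preimage[OF f1 N_open]
          openin_continuous_map_preimage[OF f2 N_open])
    moreover have "s \<in> W" unfolding W_def using s N unfolding A_def by auto
    moreover have "W \<subseteq> A"
      using N(1) same_orbit unfolding W_def A_def sheet_def inj_on_def by blast
    ultimately show "\<exists>W. openin T W \<and> s \<in> W \<and> W \<subseteq> A" by blast
  qed
  moreover have "t0 \<in> A" unfolding A_def using t0 by simp
  ultimately have "A = topspace T" using T unfolding connected_space_clopen_in by blast
  then show ?thesis using t unfolding A_def by blast
qed

lemma path_in_sheet:
  fixes a b :: real
  assumes ab: "a \<le> b" and g: "continuous_map (top_of_set {a..b}) X g" and N: "sheet N"
    and over: "orb ` g ` {a..b} \<subseteq> orb ` N" and start: "g a \<in> N"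
  shows "g ` {a..b} \<subseteq> N"
proof -
  let ?back = "inv_into N orb \<circ> (orb \<circ> g)"
  have "orb \<circ> g \<in> topspace (top_of_set {a..b}) \<rightarrow> orb ` N"
    using over by (simp add: Pi_iff image_subset_iff)
  then have "continuous_map (top_of_set {a..b}) (subtopology Q (orb ` N)) (orb \<circ> g)"
    using continuous_map_compose[OF g continuous_map_orb]
    unfolding continuous_map_in_subtopology by blast
  then have back_continuous: "continuous_map (top_of_set {a..b}) X ?back"
    using continuous_map_sheet_inverse[OF N] by (rule continuous_map_compose)
  have connected: "connected_space (top_of_set {a..b})"
    by (rule connected_space_subtopology) simp
  have g_eq: "g t = ?back t" if t: "t \<in> {a..b}" for t
  proof (rule lifts_agree[OF connected g back_continuous])
    fix s assume "s \<in> topspace (top_of_set {a..b})"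
    then have "orb (g s) \<in> orb ` N" using over by auto
    then show "orb (g s) = orb (?back s)" using sheet_inverse_in by simp
  next
    show "g a = ?back a" using sheet_inverse_orb[OF N start] by simp
  qed (use ab t in auto)
  show ?thesis
  proof
    fix y assume "y \<in> g ` {a..b}"
    then obtain t where t: "t \<in> {a..b}" "y = g t" by blast
    then have "orb (g t) \<in> orb ` N" using over by blast
    then have "inv_into N orb (orb (g t)) \<in> N" using sheet_inverse_in by blast
    moreover have "y = inv_into N orb (orb (g t))"
      using trans[OF t(2) g_eq[OF t(1)]] by (simp only: comp_apply)
    ultimately show "y \<in> N" by simp
  qed
qed

lemma lift_extend:
  fixes a b :: real
  assumes ab: "0 \<le> a" "a \<le> b"
    and f: "continuous_map (top_of_set {0..a}) X f" "\<forall>t\<in>{0..a}. orb (f t) = \<beta> t"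
    and \<beta>: "continuous_map (top_of_set {a..b}) Q \<beta>"
    and S: "sheet S" "\<beta> ` {a..b} \<subseteq> orb ` S"
  shows "\<exists>f'. continuous_map (top_of_set {0..b}) X f' \<and> f' 0 = f 0 \<and>
              (\<forall>t\<in>{0..b}. orb (f' t) = \<beta> t)"
proof -
  have a_in: "a \<in> {0..a}" using ab by simp
  have fa: "f a \<in> topspace X" using continuous_map_image_subset_topspace[OF f(1)] a_in by auto
  have "orb (f a) \<in> orb ` S"
  proof -
    have "\<beta> a \<in> orb ` S" using S(2) ab by auto
    moreover have "orb (f a) = \<beta> a" using f(2) a_in by blast
    ultimately show ?thesis by simp
  qed
  then obtain N where N: "sheet N" "f a \<in> N" "orb ` S \<subseteq> orb ` N"
    using sheet_translate[OF S(1) fa] by blast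
  have over: "\<beta> ` {a..b} \<subseteq> orb ` N" using S(2) N(3) by blast
  have "continuous_map (top_of_set {a..b}) (subtopology Q (orb ` N)) \<beta>"
    using \<beta> over by (simp add: continuous_map_in_subtopology image_subset_iff Pi_iff)
  then have \<sigma>: "continuous_map (top_of_set {a..b}) X (inv_into N orb \<circ> \<beta>)"
    using continuous_map_sheet_inverse[OF N(1)] by (rule continuous_map_compose)
  have "f a = (inv_into N orb \<circ> \<beta>) a"
    using sheet_inverse_orb[OF N(1,2)] f(2) a_in by simp
  define f' where "f' t = (if t \<le> a then f t else (inv_into N orb \<circ> \<beta>) t)" for t
  have "continuous_map (top_of_set {0..b}) X f'"
    unfolding f'_def by (rule continuous_map_glue_interval[OF ab f(1) \<sigma>]) fact
  moreover have "orb (f' t) = \<beta> t" if t: "t \<in> {0..b}" for t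
  proof (cases "t \<le> a")
    case True
    then show ?thesis using f(2) t unfolding f'_def by simp
  next
    case False
    then have "\<beta> t \<in> orb ` N" using over t by auto
    then show ?thesis using False sheet_inverse_in unfolding f'_def by simp
  qed
  moreover have "f' 0 = f 0" using ab unfolding f'_def by simp
  ultimately show ?thesis by blast
qed

lemma exists_sheet_cover_of_orbit_path:
  assumes \<beta>: "continuous_map (top_of_set {0..1}) Q \<beta>"
  shows "\<exists>m>0. \<forall>j<m. \<exists>S. sheet S \<and> \<beta> ` subinterval m j \<subseteq> orb ` S"
proof (rule subinterval_partition[OF \<beta>])
  fix t :: real assume "t \<in> {0..1}"
  then have "\<beta> t \<in> orb ` topspace X"
    using continuous_map_image_subset_topspace[OF \<beta>] topspace_orbit_space by auto
  then obtain y S where "y \<in> topspace X" "\<beta> t = orb y" and S: "sheet S" "y \<in> S"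
    using exists_sheet by blast
  then show "\<exists>S. sheet S \<and> openin Q (orb ` S) \<and> \<beta> t \<in> orb ` S"
    using openin_orb_image unfolding sheet_def by auto
qed

lemma lift_exists:
  assumes \<beta>: "pathin Q \<beta>" and x: "x \<in> topspace X" "orb x = \<beta> 0"
  shows "\<exists>f. pathin X f \<and> f 0 = x \<and> (\<forall>t\<in>{0..1}. orb (f t) = \<beta> t)"
proof -
  have \<beta>_cont: "continuous_map (top_of_set {0..1}) Q \<beta>" using \<beta> unfolding pathin_def .
  obtain m where m: "m > 0" and sheets: "\<And>j. j < m \<Longrightarrow> \<exists>S. sheet S \<and> \<beta> ` subinterval m j \<subseteq> orb ` S"
    using exists_sheet_cover_of_orbit_path[OF \<beta>_cont] by blast
  have "\<exists>f. continuous_map (top_of_set {0 .. real k / real m}) X f \<and> f 0 = x \<and>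
          (\<forall>t\<in>{0 .. real k / real m}. orb (f t) = \<beta> t)" if "k \<le> m" for k
    using that
  proof (induction k)
    case 0
    show ?case using x by (intro exI[of _ "\<lambda>_. x"]) auto
  next
    case (Suc k)
    then obtain f where f: "continuous_map (top_of_set {0 .. real k / real m}) X f" "f 0 = x"
      "\<forall>t\<in>{0 .. real k / real m}. orb (f t) = \<beta> t" by auto
    have k: "k < m" using Suc.prems by simp
    then obtain S where S: "sheet S" "\<beta> ` subinterval m k \<subseteq> orb ` S" using sheets by blast
    have "continuous_map (top_of_set {real k / real m .. real (Suc k) / real m}) Q \<beta>"
      using continuous_map_from_subtopology_mono[OF \<beta>_cont subinterval_subset[OF k]]
      unfolding subinterval_def .
    then obtain f' where "continuous_map (top_of_set {0 .. real (Suc k) / real m}) X f'" "f' 0 = f 0"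
        "\<forall>t\<in>{0 .. real (Suc k) / real m}. orb (f' t) = \<beta> t"
      using lift_extend[OF _ subinterval_bounds f(1) f(3) _ S(1) S(2)[unfolded subinterval_def]]
      by auto
    then show ?case using f(2) by blast
  qed
  from this[OF order_refl] obtain f where "continuous_map (top_of_set {0 .. real m / real m}) X f"
    "f 0 = x" "\<forall>t\<in>{0 .. real m / real m}. orb (f t) = \<beta> t"
    by blast
  moreover have "real m / real m = 1" using m by simp
  ultimately show ?thesis unfolding pathin_def by auto
qed

definition lift :: "(real \<Rightarrow> 'a set) \<Rightarrow> 'a \<Rightarrow> real \<Rightarrow> 'a" where
  "lift \<beta> x = restrict (SOME f. pathin X f \<and> f 0 = x \<and> (\<forall>t\<in>{0..1}. orb (f t) = \<beta> t)) {0..1}"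

lemma lift_is_lift:
  assumes "\<beta> \<in> paths Q" "x \<in> topspace X" "orb x = \<beta> 0"
  shows "lift \<beta> x \<in> paths X" "lift \<beta> x 0 = x" "\<forall>t\<in>{0..1}. orb (lift \<beta> x t) = \<beta> t"
proof -
  define f where "f = (SOME f. pathin X f \<and> f 0 = x \<and> (\<forall>t\<in>{0..1}. orb (f t) = \<beta> t))"
  have \<beta>: "pathin Q \<beta>" using assms(1) unfolding paths_def by blast
  have f: "pathin X f \<and> f 0 = x \<and> (\<forall>t\<in>{0..1}. orb (f t) = \<beta> t)"
    unfolding f_def by (rule someI_ex[OF lift_exists[OF \<beta> assms(2,3)]])
  have "pathin X (restrict f {0..1})" using f unfolding pathin_def
    by (auto intro: continuous_map_eq)
  then show "lift \<beta> x \<in> paths X" unfolding lift_def f_def[symmetric] paths_def by simp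
  show "lift \<beta> x 0 = x" unfolding lift_def f_def[symmetric] using f by simp
  show "\<forall>t\<in>{0..1}. orb (lift \<beta> x t) = \<beta> t"
    unfolding lift_def f_def[symmetric] using f by simp
qed

definition sheet_chain :: "nat \<Rightarrow> (nat \<Rightarrow> 'a set) \<Rightarrow> real set \<Rightarrow> 'a set \<Rightarrow> (real \<Rightarrow> 'a set) \<Rightarrow> bool" where
  "sheet_chain m N K V \<beta> \<longleftrightarrow>
     (\<forall>j<m. \<beta> ` subinterval m j \<subseteq> orb ` N j \<and> \<beta> ` (subinterval m j \<inter> K) \<subseteq> orb ` (N j \<inter> V)) \<and>
     (\<forall>j. Suc j < m \<longrightarrow> \<beta> (real (Suc j) / real m) \<in> orb ` (N j \<inter> N (Suc j)))"

lemma path_in_sheet_chain: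
  assumes g: "continuous_map (top_of_set {0..1}) X g" and lifts: "\<forall>s\<in>{0..1}. orb (g s) = \<beta> s"
    and N: "\<And>j. j < m \<Longrightarrow> sheet (N j)" and chain: "sheet_chain m N K V \<beta>"
    and start: "g 0 \<in> N 0" and j: "j < m"
  shows "g ` subinterval m j \<subseteq> N j"
proof -
  have step: "g ` subinterval m j \<subseteq> N j" if j: "j < m" and left: "g (real j / real m) \<in> N j" for j
  proof -
    have "orb ` g ` subinterval m j = \<beta> ` subinterval m j"
      using lifts subinterval_subset[OF j] by (force simp: image_comp)
    then have "orb ` g ` subinterval m j \<subseteq> orb ` N j"
      using chain j unfolding sheet_chain_def by simp
    moreover have "continuous_map (top_of_set (subinterval m j)) X g"
      using continuous_map_from_subtopology_mono[OF g subinterval_subset[OF j]] .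
    ultimately show ?thesis
      using left unfolding subinterval_def by (intro path_in_sheet[OF subinterval_bounds _ N[OF j]])
  qed
  have "g (real j / real m) \<in> N j" if "j < m" for j
    using that
  proof (induction j)
    case 0
    then show ?case using start by simp
  next
    case (Suc j)
    then have j: "j < m" by simp
    have "g (real (Suc j) / real m) \<in> N j"
      using step[OF j Suc.IH[OF j]] right_mem_subinterval by blast
    moreover have "orb (g (real (Suc j) / real m)) \<in> orb ` (N j \<inter> N (Suc j))"
    proof -
      have "real (Suc j) / real m \<in> {0..1}"
        using subinterval_subset[OF j] right_mem_subinterval[of j m] by blast
      then show ?thesis using lifts chain Suc.prems unfolding sheet_chain_def by simp
    qed
    then obtain w where w: "w \<in> N j" "w \<in> N (Suc j)" "orb (g (real (Suc j) / real m)) = orb w"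
      by blast
    moreover have "inj_on orb (N j)" using N[OF j] unfolding sheet_def by blast
    ultimately have "g (real (Suc j) / real m) = w" by (metis inj_onD)
    then show ?case using w(2) by simp
  qed
  then show ?thesis using step j by blast
qed

lemma path_image_subset_sheet_chain:
  assumes g: "continuous_map (top_of_set {0..1}) X g" and lifts: "\<forall>s\<in>{0..1}. orb (g s) = \<beta> s"
    and m: "m > 0" and N: "\<And>j. j < m \<Longrightarrow> sheet (N j)" and chain: "sheet_chain m N K V \<beta>"
    and K: "K \<subseteq> {0..1}" and start: "g 0 \<in> N 0"
  shows "g ` K \<subseteq> V"
proof
  fix y assume "y \<in> g ` K"
  then obtain s where s: "s \<in> K" "y = g s" by blast
  obtain j where j: "j < m" "s \<in> subinterval m j" using subinterval_cover[OF _ m] s K by blast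
  have "g s \<in> N j" using path_in_sheet_chain[OF g lifts N chain start j(1)] j(2) by blast
  moreover have "orb (g s) \<in> orb ` (N j \<inter> V)"
  proof -
    have "\<beta> s \<in> \<beta> ` (subinterval m j \<inter> K)" using j(2) s(1) by blast
    then have "\<beta> s \<in> orb ` (N j \<inter> V)" using chain j(1) unfolding sheet_chain_def by blast
    moreover have "orb (g s) = \<beta> s" using lifts s(1) K by blast
    ultimately show ?thesis by simp
  qed
  then obtain w where w: "w \<in> N j" "w \<in> V" "orb (g s) = orb w" by blast
  moreover have "inj_on orb (N j)" using N[OF j(1)] unfolding sheet_def by blast
  ultimately have "g s = w" by (metis inj_onD)
  then show "y \<in> V" using s(2) w(2) by simp
qed

lemma sheet_chain_of_path:
  assumes lifts: "\<forall>s\<in>{0..1}. orb (f s) = \<beta> s"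
    and N: "\<And>j. j < m \<Longrightarrow> f ` subinterval m j \<subseteq> N j" and V: "f ` K \<subseteq> V"
    and K: "K \<subseteq> {0..1}"
  shows "sheet_chain m N K V \<beta>"
  unfolding sheet_chain_def
proof (intro conjI allI impI)
  fix j assume j: "j < m"
  have image_eq: "\<beta> ` S = orb ` f ` S" if "S \<subseteq> {0..1}" for S
    using lifts that by (force simp: image_comp)
  have I: "subinterval m j \<subseteq> {0..1}" using subinterval_subset[OF j] .
  have "f ` (subinterval m j \<inter> K) \<subseteq> N j \<inter> V" using N[OF j] V by blast
  then show "\<beta> ` (subinterval m j \<inter> K) \<subseteq> orb ` (N j \<inter> V)"
    using I by (subst image_eq) (auto intro!: image_mono)
  show "\<beta> ` subinterval m j \<subseteq> orb ` N j"
    using N[OF j] I by (subst image_eq) (auto intro!: image_mono)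
next
  fix j assume j: "Suc j < m"
  let ?s = "real (Suc j) / real m"
  have "?s \<in> {0..1}" using subinterval_subset[OF j] left_mem_subinterval[of "Suc j" m] by blast
  moreover have "f ?s \<in> N j" "f ?s \<in> N (Suc j)"
    using N[of j] N[OF j] j right_mem_subinterval[of j m] left_mem_subinterval[of "Suc j" m] by auto
  ultimately show "\<beta> ?s \<in> orb ` (N j \<inter> N (Suc j))" using lifts by force
qed

lemma openin_path_image_in_orb_image:
  assumes B: "continuous_map T (path_space Q) B" and I: "compact I" "I \<subseteq> {0..1}" and S: "openin X S"
  shows "openin T {t \<in> topspace T. B t ` I \<subseteq> orb ` S}"
  using openin_path_space_preimage[OF B I openin_orb_image[OF S]] .

lemma openin_sheet_chain:
  assumes B: "continuous_map T (path_space Q) B" and N: "\<And>j. j < m \<Longrightarrow> sheet (N j)"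
    and K: "compact K" "K \<subseteq> {0..1}" and V: "openin X V"
  shows "openin T {t \<in> topspace T. sheet_chain m N K V (B t)}"
proof -
  have N_open: "openin X (N j)" if "j < m" for j using N[OF that] unfolding sheet_def by blast
  have cover: "openin T {t \<in> topspace T. \<forall>j\<in>{..<m}. B t ` subinterval m j \<subseteq> orb ` N j \<and>
      B t ` (subinterval m j \<inter> K) \<subseteq> orb ` (N j \<inter> V)}"
  proof (rule openin_Ball_finite)
    fix j assume "j \<in> {..<m}"
    then have j: "j < m" by simp
    let ?A = "{t \<in> topspace T. B t ` subinterval m j \<subseteq> orb ` N j}"
    let ?B = "{t \<in> topspace T. B t ` (subinterval m j \<inter> K) \<subseteq> orb ` (N j \<inter> V)}"
    have "compact (subinterval m j \<inter> K)"
      by (rule closed_Int_compact[OF _ K(1)]) (simp add: subinterval_def)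
    moreover have "subinterval m j \<inter> K \<subseteq> {0..1}" using subinterval_subset[OF j] by blast
    ultimately have "openin T ?B"
      by (rule openin_path_image_in_orb_image[OF B _ _ openin_Int[OF N_open[OF j] V]])
    with openin_path_image_in_orb_image[OF B compact_subinterval subinterval_subset[OF j] N_open[OF j]]
    have "openin T (?A \<inter> ?B)" by (rule openin_Int)
    moreover have "?A \<inter> ?B = {t \<in> topspace T. B t ` subinterval m j \<subseteq> orb ` N j \<and>
        B t ` (subinterval m j \<inter> K) \<subseteq> orb ` (N j \<inter> V)}" by blast
    ultimately show "openin T {t \<in> topspace T. B t ` subinterval m j \<subseteq> orb ` N j \<and>
        B t ` (subinterval m j \<inter> K) \<subseteq> orb ` (N j \<inter> V)}" by simp
  qed simp
  have link: "openin T {t \<in> topspace T. \<forall>j\<in>{j. Suc j < m}.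
      B t (real (Suc j) / real m) \<in> orb ` (N j \<inter> N (Suc j))}"
  proof (rule openin_Ball_finite)
    show "finite {j. Suc j < m}" by (rule finite_subset[of _ "{..<m}"]) auto
    fix j assume "j \<in> {j. Suc j < m}"
    then have j: "j < m" "Suc j < m" by auto
    have "{real (Suc j) / real m} \<subseteq> {0..1}"
      using subinterval_subset[OF j(1)] right_mem_subinterval[of j m] by blast
    then have "openin T {t \<in> topspace T. B t ` {real (Suc j) / real m} \<subseteq> orb ` (N j \<inter> N (Suc j))}"
      by (rule openin_path_image_in_orb_image[OF B compact_sing _ openin_Int[OF N_open[OF j(1)] N_open[OF j(2)]]])
    then show "openin T {t \<in> topspace T. B t (real (Suc j) / real m) \<in> orb ` (N j \<inter> N (Suc j))}"
      by simp
  qed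
  have "{t \<in> topspace T. sheet_chain m N K V (B t)} =
      {t \<in> topspace T. \<forall>j\<in>{..<m}. B t ` subinterval m j \<subseteq> orb ` N j \<and>
        B t ` (subinterval m j \<inter> K) \<subseteq> orb ` (N j \<inter> V)} \<inter>
      {t \<in> topspace T. \<forall>j\<in>{j. Suc j < m}. B t (real (Suc j) / real m) \<in> orb ` (N j \<inter> N (Suc j))}"
    unfolding sheet_chain_def by (simp add: Ball_def) blast
  then show ?thesis using openin_Int[OF cover link] by simp
qed

lemma lift_family:
  assumes B: "continuous_map T (path_space Q) B" and Z: "continuous_map T X Z"
    and t: "t \<in> topspace T" and start: "orb (Z t) = B t 0"
  shows "lift (B t) (Z t) \<in> paths X" "continuous_map (top_of_set {0..1}) X (lift (B t) (Z t))"
    "lift (B t) (Z t) 0 = Z t" "\<forall>s\<in>{0..1}. orb (lift (B t) (Z t) s) = B t s"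
proof -
  have "B t \<in> paths Q" using continuous_map_path_space_paths[OF B t] .
  moreover have "Z t \<in> topspace X" using continuous_map_image_subset_topspace[OF Z] t by blast
  ultimately show "lift (B t) (Z t) \<in> paths X" "lift (B t) (Z t) 0 = Z t"
    "\<forall>s\<in>{0..1}. orb (lift (B t) (Z t) s) = B t s"
    using lift_is_lift[of "B t" "Z t"] start by blast+
  then show "continuous_map (top_of_set {0..1}) X (lift (B t) (Z t))"
    unfolding paths_def pathin_def by blast
qed

lemma exists_sheet_cover_of_path:
  assumes f: "continuous_map (top_of_set {0..1}) X f"
  obtains m N where "m > 0" "\<And>j. j < m \<Longrightarrow> sheet (N j) \<and> f ` subinterval m j \<subseteq> N j"
proof -
  have "\<exists>m>0. \<forall>j<m. \<exists>S. sheet S \<and> f ` subinterval m j \<subseteq> S"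
  proof (rule subinterval_partition[where N = "\<lambda>S. S", OF f])
    fix s :: real assume "s \<in> {0..1}"
    then have "f s \<in> topspace X" using continuous_map_image_subset_topspace[OF f] by auto
    then show "\<exists>S. sheet S \<and> openin X S \<and> f s \<in> S" using exists_sheet unfolding sheet_def by blast
  qed
  then obtain m where m: "m > 0" and parts: "\<forall>j\<in>{..<m}. \<exists>S. sheet S \<and> f ` subinterval m j \<subseteq> S"
    by auto
  from bchoice[OF parts] obtain N where "\<forall>j\<in>{..<m}. sheet (N j) \<and> f ` subinterval m j \<subseteq> N j"
    by blast
  then show ?thesis using that[OF m] by blast
qed

lemma lift_image_subset_near:
  assumes B: "continuous_map T (path_space Q) B" and Z: "continuous_map T X Z"
    and start: "\<And>t. t \<in> topspace T \<Longrightarrow> orb (Z t) = B t 0"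
    and KV: "compact K" "K \<subseteq> {0..1}" "openin X V"
    and t0: "t0 \<in> topspace T" "lift (B t0) (Z t0) ` K \<subseteq> V"
  shows "\<exists>W. openin T W \<and> t0 \<in> W \<and> W \<subseteq> {t \<in> topspace T. lift (B t) (Z t) ` K \<subseteq> V}"
proof -
  have lifted: "lift (B t) (Z t) \<in> paths X" "continuous_map (top_of_set {0..1}) X (lift (B t) (Z t))"
    "lift (B t) (Z t) 0 = Z t" "\<forall>s\<in>{0..1}. orb (lift (B t) (Z t) s) = B t s"
    if "t \<in> topspace T" for t
    using lift_family[OF B Z that start[OF that]] by blast+
  define f where "f = lift (B t0) (Z t0)"
  obtain m N where m: "m > 0" and N: "\<And>j. j < m \<Longrightarrow> sheet (N j) \<and> f ` subinterval m j \<subseteq> N j"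
    using exists_sheet_cover_of_path[OF lifted(2)[OF t0(1)]] unfolding f_def by blast
  have N_sheet: "sheet (N j)" if "j < m" for j using N[OF that] by blast
  have N0: "openin X (N 0)" using N_sheet[OF m] unfolding sheet_def by blast
  text \<open>Lifts of paths near B t0 stay in the chain of sheets N met by the lift of B t0.\<close>
  define W where "W = {t \<in> topspace T. Z t \<in> N 0} \<inter> {t \<in> topspace T. sheet_chain m N K V (B t)}"
  have "openin T W" unfolding W_def
    by (rule openin_Int[OF openin_continuous_map_preimage[OF Z N0] openin_sheet_chain[OF B N_sheet KV]])
  moreover have "t0 \<in> W"
  proof -
    have "0 \<in> subinterval m 0" using left_mem_subinterval[of 0 m] by simp
    then have "f 0 \<in> N 0" using N[OF m] by blast
    then have "Z t0 \<in> N 0" using lifted(3)[OF t0(1)] unfolding f_def by simp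
    moreover have "f ` subinterval m j \<subseteq> N j" if "j < m" for j using N[OF that] by blast
    then have "sheet_chain m N K V (B t0)"
      by (rule sheet_chain_of_path[OF lifted(4)[OF t0(1), folded f_def] _ t0(2)[folded f_def] KV(2)])
    ultimately show ?thesis unfolding W_def using t0(1) by blast
  qed
  moreover have "W \<subseteq> {t \<in> topspace T. lift (B t) (Z t) ` K \<subseteq> V}"
  proof
    fix t assume "t \<in> W"
    then have t: "t \<in> topspace T" "Z t \<in> N 0" "sheet_chain m N K V (B t)" unfolding W_def by auto
    have "lift (B t) (Z t) 0 \<in> N 0" using lifted(3)[OF t(1)] t(2) by simp
    then have "lift (B t) (Z t) ` K \<subseteq> V"
      using path_image_subset_sheet_chain[OF lifted(2)[OF t(1)] lifted(4)[OF t(1)] m _ t(3) KV(2)] N_sheet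
      by blast
    then show "t \<in> {t \<in> topspace T. lift (B t) (Z t) ` K \<subseteq> V}" using t(1) by simp
  qed
  ultimately show ?thesis by blast
qed

lemma continuous_map_lift:
  assumes B: "continuous_map T (path_space Q) B" and Z: "continuous_map T X Z"
    and start: "\<And>t. t \<in> topspace T \<Longrightarrow> orb (Z t) = B t 0"
  shows "continuous_map T (path_space X) (\<lambda>t. lift (B t) (Z t))"
proof (rule continuous_map_path_spaceI)
  show "lift (B t) (Z t) \<in> paths X" if "t \<in> topspace T" for t
    using lift_family(1)[OF B Z that start[OF that]] .
  fix K :: "real set" and V assume KV: "compact K" "K \<subseteq> {0..1}" "openin X V"
  show "openin T {t \<in> topspace T. lift (B t) (Z t) ` K \<subseteq> V}"
    using lift_image_subset_near[OF B Z start KV]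
    by (subst openin_subopen) blast
qed

subsection \<open>Comparing the sectional categories\<close>

lemma multipath_G_section:
  assumes s: "continuous_map T (multipath_space X n) s"
    and e: "\<And>i. i < n \<Longrightarrow> continuous_map T X (\<lambda>t. e t i)"
    and same_orbit: "\<And>t i. t \<in> topspace T \<Longrightarrow> i < n \<Longrightarrow> orb (s t i 1) = orb (e t i)"
  shows "\<exists>s'. continuous_map T (multipath_G_space X G act n) s' \<and>
              (\<forall>t\<in>topspace T. \<forall>i<n. fst (s' t) i 1 = e t i)"
proof -
  have s_path: "continuous_map T (path_space X) (\<lambda>t. s t i)" if "i < n" for i
    using s that unfolding continuous_map_multipath_space_iff by blast
  have s_end: "continuous_map T X (\<lambda>t. s t i 1)" if "i < n" for i
    using continuous_map_compose[OF s_path[OF that] continuous_map_path_eval[of 1]] by (simp add: o_def)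
  obtain H where H: "\<And>i. i < n \<Longrightarrow> continuous_map T (discrete_topology (carrier G)) (H i)"
    and H_end: "\<And>i t. i < n \<Longrightarrow> t \<in> topspace T \<Longrightarrow> act (s t i 1) (H i t) = e t i"
    using exists_continuous_shifts[where F = "\<lambda>t i. s t i 1", OF s_end e same_orbit] by blast
  text \<open>Translate the i-th path by H i; consecutive start points then differ by the
    group element (H i)\<inverse> H (i+1).\<close>
  define s' where "s' t = ((\<lambda>i\<in>{..<n}. path_map (\<lambda>x. act x (H i t)) (s t i)),
      (\<lambda>i\<in>{..<n - 1}. inv\<^bsub>G\<^esub> (H i t) \<otimes>\<^bsub>G\<^esub> H (Suc i) t))" for t
  have "continuous_map T (multipath_G_space X G act n) s'"
  proof (rule continuous_map_multipath_G_spaceI)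
    show "continuous_map T (power_top (path_space X) n) (\<lambda>t. fst (s' t))"
      unfolding power_top_def continuous_map_componentwise
      using continuous_map_act_path[OF s_path H] by (auto simp: s'_def)
    show "continuous_map T (power_top (discrete_topology (carrier G)) (n - 1)) (\<lambda>t. snd (s' t))"
      unfolding power_top_def continuous_map_componentwise
      using continuous_map_discrete_binop[OF H H, of _ _ "\<lambda>a b. inv\<^bsub>G\<^esub> a \<otimes>\<^bsub>G\<^esub> b"]
      by (auto simp: s'_def)
  next
    fix t i assume t: "t \<in> topspace T" and i: "i < n - 1"
    then have "s t i 0 = s t (Suc i) 0"
      using s unfolding continuous_map_multipath_space_iff by auto
    moreover have "s t i 0 \<in> topspace X"
      using paths_in_topspace[OF continuous_map_path_space_paths[OF s_path t]] i by simp
    moreover have "H k t \<in> carrier G" if "k < n" for k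
      using continuous_map_image_subset_topspace[OF H[OF that]] t by auto
    moreover have "i < n" "Suc i < n" using i by auto
    ultimately show "act (fst (s' t) i 0) (snd (s' t) i) = fst (s' t) (Suc i) 0"
      using i by (simp add: s'_def path_map_def act_act_inv_mult)
  qed
  moreover have "fst (s' t) i 1 = e t i" if "t \<in> topspace T" "i < n" for t i
    using H_end[OF that(2,1)] that unfolding s'_def path_map_def by simp
  ultimately show ?thesis by blast
qed

lemma continuous_lift_ending_at:
  assumes B: "continuous_map T (path_space Q) B" and Z: "continuous_map T X Z"
    and finish: "\<And>t. t \<in> topspace T \<Longrightarrow> orb (Z t) = B t 1"
  shows "\<exists>\<Gamma>. continuous_map T (path_space X) \<Gamma> \<and>
             (\<forall>t\<in>topspace T. \<Gamma> t 1 = Z t \<and> (\<forall>s\<in>{0..1}. orb (\<Gamma> t s) = B t s))"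
proof -
  have B_rev: "continuous_map T (path_space Q) (\<lambda>t. path_reverse (B t))"
    using continuous_map_compose[OF B continuous_map_path_reverse] by (simp add: o_def)
  have start: "orb (Z t) = path_reverse (B t) 0" if "t \<in> topspace T" for t
    using finish[OF that] by (simp add: path_reverse_def)
  let ?\<Gamma> = "\<lambda>t. path_reverse (lift (path_reverse (B t)) (Z t))"
  have "continuous_map T (path_space X) ?\<Gamma>"
    using continuous_map_compose[OF continuous_map_lift[OF B_rev Z start] continuous_map_path_reverse]
    by (simp add: o_def)
  moreover have "?\<Gamma> t 1 = Z t \<and> (\<forall>s\<in>{0..1}. orb (?\<Gamma> t s) = B t s)" if t: "t \<in> topspace T" for t
  proof -
    define L where "L = lift (path_reverse (B t)) (Z t)"
    have "L 0 = Z t" "\<forall>s\<in>{0..1}. orb (L s) = path_reverse (B t) s"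
      using lift_family(3,4)[OF B_rev Z t start[OF t]] unfolding L_def by simp_all
    then show ?thesis unfolding L_def[symmetric] by (auto simp: path_reverse_def)
  qed
  ultimately show ?thesis by blast
qed

lemma multipath_section_lift:
  assumes sg: "continuous_map T (multipath_space Q n) sg" and x0: "continuous_map T X x0"
    and n: "0 < n" and start: "\<And>t. t \<in> topspace T \<Longrightarrow> orb (x0 t) = sg t 0 1"
  shows "\<exists>s. continuous_map T (multipath_space X n) s \<and>
             (\<forall>t\<in>topspace T. s t 0 1 = x0 t \<and> (\<forall>i<n. orb (s t i 1) = sg t i 1))"
proof -
  have sg_path: "continuous_map T (path_space Q) (\<lambda>t. sg t i)" if "i < n" for i
    using sg that unfolding continuous_map_multipath_space_iff by blast
  have sg_common: "sg t i 0 = sg t 0 0" if "t \<in> topspace T" "i < n" for t i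
    using sg that n unfolding continuous_map_multipath_space_iff by blast
  text \<open>The 0-th path is lifted backwards from x0 t; its start point z t lies over the common
    start point of all the paths sg t i, from which the others are lifted.\<close>
  obtain \<Gamma> where \<Gamma>: "continuous_map T (path_space X) \<Gamma>"
    and \<Gamma>_lift: "\<forall>t\<in>topspace T. \<Gamma> t 1 = x0 t \<and> (\<forall>u\<in>{0..1}. orb (\<Gamma> t u) = sg t 0 u)"
    using continuous_lift_ending_at[OF sg_path[OF n] x0 start] by blast
  define z where "z t = \<Gamma> t 0" for t
  have z: "continuous_map T X z"
    using continuous_map_compose[OF \<Gamma> continuous_map_path_eval[of 0]] unfolding z_def by (simp add: o_def)
  have z_orb: "orb (z t) = sg t i 0" if "t \<in> topspace T" "i < n" for t i
    using \<Gamma>_lift sg_common[OF that] that(1) unfolding z_def by simp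
  define s where "s t = (\<lambda>i\<in>{..<n}. if i = 0 then \<Gamma> t else lift (sg t i) (z t))" for t
  have "continuous_map T (multipath_space X n) s"
    unfolding continuous_map_multipath_space_iff
  proof (intro conjI allI impI ballI)
    fix i assume i: "i < n"
    show "continuous_map T (path_space X) (\<lambda>t. s t i)"
    proof (cases "i = 0")
      case True
      then show ?thesis using \<Gamma> i unfolding s_def by simp
    next
      case False
      have "continuous_map T (path_space X) (\<lambda>t. lift (sg t i) (z t))"
        by (rule continuous_map_lift[OF sg_path[OF i] z]) (use z_orb i in blast)
      then show ?thesis using False i unfolding s_def by simp
    qed
  next
    fix t i j assume t: "t \<in> topspace T" and "i < n" "j < n"
    moreover have "s t k 0 = z t" if "k < n" for k
      using lift_family(3)[OF sg_path[OF that] z t z_orb[OF t that]] that unfolding s_def z_def by simp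
    ultimately show "s t i 0 = s t j 0" by simp
  qed (simp add: s_def)
  moreover have "s t 0 1 = x0 t \<and> (\<forall>i<n. orb (s t i 1) = sg t i 1)" if t: "t \<in> topspace T" for t
    using \<Gamma>_lift t start[OF t] n lift_family(4)[OF sg_path z t z_orb[OF t]]
    unfolding s_def by auto
  ultimately show ?thesis by blast
qed

lemma continuous_map_effl_base:
  assumes n: "n \<ge> 1"
  shows "continuous_map (power_top X n) (prod_topology X (power_top Q (n - 1)))
           (\<lambda>x. (x 0, \<lambda>i\<in>{..<n - 1}. orb (x (Suc i))))"
proof (intro continuous_map_pairedI)
  show "continuous_map (power_top X n) X (\<lambda>x. x 0)"
    using n by (simp add: continuous_map_power_top_proj)
  show "continuous_map (power_top X n) (power_top Q (n - 1)) (\<lambda>x. \<lambda>i\<in>{..<n - 1}. orb (x (Suc i)))"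
    unfolding power_top_def[of Q] continuous_map_componentwise
  proof (intro conjI ballI)
    fix i assume i: "i \<in> {..<n - 1}"
    then have "Suc i < n" by auto
    then have "continuous_map (power_top X n) Q (orb \<circ> (\<lambda>x. x (Suc i)))"
      by (intro continuous_map_compose[OF continuous_map_power_top_proj continuous_map_orb])
    then show "continuous_map (power_top X n) Q (\<lambda>x. (\<lambda>i\<in>{..<n - 1}. orb (x (Suc i))) i)"
      using i by (simp add: o_def)
  qed auto
qed

lemma continuous_map_orbit_base:
  "continuous_map (prod_topology X (power_top Q (n - 1))) (power_top Q n)
     (\<lambda>p. \<lambda>i\<in>{..<n}. if i = 0 then orb (fst p) else snd p (i - 1))"
  unfolding power_top_def[of Q n] continuous_map_componentwise
proof (intro conjI ballI)
  fix k assume k: "k \<in> {..<n}"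
  show "continuous_map (prod_topology X (power_top Q (n - 1))) Q
      (\<lambda>p. (\<lambda>i\<in>{..<n}. if i = 0 then orb (fst p) else snd p (i - 1)) k)"
  proof (cases "k = 0")
    case True
    have "continuous_map (prod_topology X (power_top Q (n - 1))) Q (orb \<circ> fst)"
      by (rule continuous_map_compose[OF continuous_map_fst continuous_map_orb])
    then show ?thesis using k True by (simp add: o_def)
  next
    case False
    then have "k - 1 < n - 1" using k by auto
    then have "continuous_map (prod_topology X (power_top Q (n - 1))) Q ((\<lambda>x. x (k - 1)) \<circ> snd)"
      by (intro continuous_map_compose[OF continuous_map_snd continuous_map_power_top_proj])
    then show ?thesis using k False by (simp add: o_def)
  qed
qed auto

lemma orb_eq_of_effl_base_eq:
  assumes eq: "(y 0, \<lambda>j\<in>{..<n - 1}. orb (y (Suc j))) = (x 0, \<lambda>j\<in>{..<n - 1}. orb (x (Suc j)))"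
    and i: "i < n"
  shows "orb (y i) = orb (x i)"
proof (cases i)
  case 0
  then show ?thesis using arg_cong[OF eq, of fst] by simp
next
  case (Suc k)
  then have "k < n - 1" using i by simp
  then show ?thesis using arg_cong[OF eq, of "\<lambda>p. snd p k"] Suc by simp
qed

lemma TC_effv_le_TC_effl:
  assumes n: "n \<ge> 1"
  shows "TC_effv n X G act \<le> TC_effl n X G act"
  unfolding TC_effv_def TC_effl_def
proof (rule secat_le_pullback[OF continuous_map_effl_base[OF n]])
  let ?f = "\<lambda>x. (x 0, \<lambda>i\<in>{..<n - 1}. orb (x (Suc i)))"
  fix U s
  assume U: "openin (prod_topology X (power_top Q (n - 1))) U"
    and s: "continuous_map (subtopology (prod_topology X (power_top Q (n - 1))) U) (multipath_space X n) s"
    and s_end: "\<forall>b\<in>U. (s b 0 1, \<lambda>i\<in>{..<n - 1}. orb (s b (Suc i) 1)) = b"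
  let ?T = "subtopology (power_top X n) {x \<in> topspace (power_top X n). ?f x \<in> U}"
  have "continuous_map ?T (subtopology (prod_topology X (power_top Q (n - 1))) U) ?f"
    using continuous_map_from_subtopology[OF continuous_map_effl_base[OF n]]
    by (auto simp: continuous_map_in_subtopology)
  then have sf: "continuous_map ?T (multipath_space X n) (s \<circ> ?f)"
    using s by (rule continuous_map_compose)
  have coordinates: "continuous_map ?T X (\<lambda>x. x i)" if "i < n" for i
    using continuous_map_from_subtopology[OF continuous_map_power_top_proj[OF that]] .
  have same_orbit: "orb ((s \<circ> ?f) x i 1) = orb (x i)" if x: "x \<in> topspace ?T" and i: "i < n" for x i
  proof -
    have "?f x \<in> U" using x by simp
    then have "?f (\<lambda>j. (s \<circ> ?f) x j 1) = ?f x" using s_end by simp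
    then show ?thesis by (rule orb_eq_of_effl_base_eq[where y = "\<lambda>j. (s \<circ> ?f) x j 1", OF _ i])
  qed
  obtain s' where s': "continuous_map ?T (multipath_G_space X G act n) s'"
    and s'_end: "\<forall>x\<in>topspace ?T. \<forall>i<n. fst (s' x) i 1 = x i"
    using multipath_G_section[OF sf coordinates same_orbit] by blast
  have "(\<lambda>(\<alpha>, g). eval_end n \<alpha>) (s' x) = x" if x: "x \<in> {x \<in> topspace (power_top X n). ?f x \<in> U}" for x
  proof
    fix i
    have "x \<in> extensional {..<n}" using x by (simp add: topspace_power_top PiE_iff)
    then show "(\<lambda>(\<alpha>, g). eval_end n \<alpha>) (s' x) i = x i"
      using s'_end x by (cases "i < n") (auto simp: eval_end_def case_prod_beta extensional_def)
  qed
  with s' show "\<exists>s'. continuous_map ?T (multipath_G_space X G act n) s' \<and>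
      (\<forall>x\<in>{x \<in> topspace (power_top X n). ?f x \<in> U}. (\<lambda>(\<alpha>, g). eval_end n \<alpha>) (s' x) = x)"
    by blast
qed

lemma TC_effl_le_TC_orbit_space:
  assumes n: "n \<ge> 1"
  shows "TC_effl n X G act \<le> TC n Q"
  unfolding TC_effl_def TC_def
proof (rule secat_le_pullback[OF continuous_map_orbit_base])
  let ?f = "\<lambda>p. \<lambda>i\<in>{..<n}. if i = 0 then orb (fst p) else snd p (i - 1)"
  fix U sg
  assume U: "openin (power_top Q n) U"
    and sg: "continuous_map (subtopology (power_top Q n) U) (multipath_space Q n) sg"
    and sg_end: "\<forall>b\<in>U. eval_end n (sg b) = b"
  let ?T = "subtopology (prod_topology X (power_top Q (n - 1)))
    {p \<in> topspace (prod_topology X (power_top Q (n - 1))). ?f p \<in> U}"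
  have "continuous_map ?T (subtopology (power_top Q n) U) ?f"
    using continuous_map_from_subtopology[OF continuous_map_orbit_base]
    by (auto simp: continuous_map_in_subtopology)
  then have sgf: "continuous_map ?T (multipath_space Q n) (sg \<circ> ?f)"
    using sg by (rule continuous_map_compose)
  have sgf_end: "(sg \<circ> ?f) p i 1 = ?f p i" if p: "p \<in> topspace ?T" and i: "i < n" for p i
  proof -
    have "?f p \<in> U" using p by simp
    then have "eval_end n (sg (?f p)) i = ?f p i" using sg_end by simp
    then show ?thesis using i unfolding eval_end_def by simp
  qed
  have fst_cont: "continuous_map ?T X fst"
    by (rule continuous_map_from_subtopology[OF continuous_map_fst])
  have start: "orb (fst p) = (sg \<circ> ?f) p 0 1" if "p \<in> topspace ?T" for p
    using sgf_end[OF that, of 0] n by simp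
  obtain s where s: "continuous_map ?T (multipath_space X n) s"
    and s_end: "\<forall>p\<in>topspace ?T. s p 0 1 = fst p \<and> (\<forall>i<n. orb (s p i 1) = (sg \<circ> ?f) p i 1)"
    using multipath_section_lift[OF sgf fst_cont _ start] n by (meson less_le_trans zero_less_one)
  have "(s p 0 1, \<lambda>i\<in>{..<n - 1}. orb (s p (Suc i) 1)) = p"
    if p: "p \<in> {p \<in> topspace (prod_topology X (power_top Q (n - 1))). ?f p \<in> U}" for p
  proof (rule prod_eqI)
    show "fst (s p 0 1, \<lambda>i\<in>{..<n - 1}. orb (s p (Suc i) 1)) = fst p" using s_end p by simp
    have "snd p \<in> extensional {..<n - 1}" using p by (auto simp: topspace_power_top PiE_iff)
    moreover have "orb (s p (Suc k) 1) = snd p k" if "k < n - 1" for k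
      using s_end sgf_end[of p "Suc k"] p that by simp
    ultimately show "snd (s p 0 1, \<lambda>i\<in>{..<n - 1}. orb (s p (Suc i) 1)) = snd p"
      by (intro ext) (auto simp: extensional_def)
  qed
  with s show "\<exists>s'. continuous_map ?T (multipath_space X n) s' \<and>
      (\<forall>p\<in>{p \<in> topspace (prod_topology X (power_top Q (n - 1))). ?f p \<in> U}.
         (s' p 0 1, \<lambda>i\<in>{..<n - 1}. orb (s' p (Suc i) 1)) = p)"
    by blast
qed

lemma TC_orbit_space_le_TC_orb: "TC n Q \<le> TC_orb n X G act"
  unfolding TC_def TC_orb_def
proof (rule secat_le_pullback[where f = "\<lambda>x. x"])
  show "continuous_map (power_top Q n) (power_top Q n) (\<lambda>x. x)" by simp
  fix U s
  assume U: "openin (power_top Q n) U"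
    and s: "continuous_map (subtopology (power_top Q n) U) (multipath_space X n) s"
    and s_end: "\<forall>b\<in>U. (\<lambda>i\<in>{..<n}. orb (s b i 1)) = b"
  let ?s' = "(\<lambda>\<alpha>. \<lambda>i\<in>{..<n}. path_map orb (\<alpha> i)) \<circ> s"
  have "{b \<in> topspace (power_top Q n). b \<in> U} = U" using openin_subset[OF U] by auto
  moreover have "continuous_map (subtopology (power_top Q n) U) (multipath_space Q n) ?s'"
    using s continuous_map_multipath_path_map[OF continuous_map_orb] by (rule continuous_map_compose)
  moreover have "eval_end n (?s' b) = b" if "b \<in> U" for b
  proof -
    have "eval_end n (?s' b) = (\<lambda>i\<in>{..<n}. orb (s b i 1))"
      unfolding eval_end_def path_map_def by (rule ext) simp
    then show ?thesis using s_end that by simp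
  qed
  ultimately show "\<exists>s'. continuous_map (subtopology (power_top Q n) {b \<in> topspace (power_top Q n). b \<in> U})
      (multipath_space Q n) s' \<and> (\<forall>b\<in>{b \<in> topspace (power_top Q n). b \<in> U}. eval_end n (s' b) = b)"
    by auto
qed

end

theorem proposition3:
  fixes X :: "'a topology" and G :: "('g, 'm) monoid_scheme" and act :: "'a \<Rightarrow> 'g \<Rightarrow> 'a"
    and n :: nat
  assumes "Hausdorff_space X" and "path_connected_space X" and "locally_path_connected_space X"
    and "free_action G X act" and "finite (carrier G)" and "n \<ge> 2"
  shows "TC_effv n X G act \<le> TC_effl n X G act \<and>
         TC_effl n X G act \<le> TC n (orbit_space X G act) \<and>
         TC n (orbit_space X G act) \<le> TC_orb n X G act"
proof -
  interpret free_finite_action X G act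
    using assms(1,4,5) by unfold_locales
  have "n \<ge> 1" using assms(6) by simp
  then show ?thesis
    using TC_effv_le_TC_effl TC_effl_le_TC_orbit_space TC_orbit_space_le_TC_orb by blast
qed

end
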